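(* The product $*$ on $K[\mathcal{T}_\infty]$ is associative, with unit the one-node tree $\odot$; hence $(K[\mathcal{T}_\infty],* )$ is a (unital associative) algebra.
   Context: $K$ is a field. A tree is a finite planar rooted tree; its degree is the number of non-root nodes; $\odot$ is the one-node tree; $\mathcal{T}_\infty$ is the set of all trees and $K[\mathcal{T}_\infty]$ the $K$-vector space with basis $\mathcal{T}_\infty$. Nodes $N(t)$ of a tree are ordered by depth-first post-order (at each node traverse subtrees left to right recursively, then the node; root maximal); write $u_1<\dots<u_n$ for the non-root nodes. For a set $A$ of non-root nodes, $t_A$ is obtained by deleting the non-root nodes outside $A$ (children of a deleted node attached in order to its parent in its place); $t_{[i,j]}=t_{\{u_h,\dots,u_k\}}$ if $i\le j$ and $[i,j]\cap[n]=[h,k]\ne\emptyset$, else $\odot$. A partition of a tree $u$ of degree $n\ge1$ is an ordered tuple $(u_{[n_0+1,n_1]},\dots,u_{[n_{k-1}+1,n_k]})$ with $0=n_0<\dots<n_k=n$; $\mathcal{P}(u)$ is the set of partitions. For $P=(u_1,\dots,u_k)$, $I(P,t)$ is the set of maps $f$ from blocks to $N(t)$ with $f(u_1)<\dots<f(u_k)$. The hash product $t\#_{P,f}u$ is obtained from $t$ by identifying the root of each $u_i$ with $f(u_i)$, the children of the root of $u_i$ becoming children of $f(u_i)$ placed to the right of its original children. The product $*$ is the bilinear extension of $t* u=\sum_{P\in\mathcal{P}(u)}\sum_{f\in I(P,t)}t\#_{P,f}u$ for $|u|\ge1$ and $t*\odot=t$. *)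

theory Defs
  imports Main "HOL-Library.Poly_Mapping"
begin

datatype tree = Node "tree list"

fun children :: "tree \<Rightarrow> tree list" where
  "children (Node ts) = ts"

definition odot :: tree where
  "odot = Node []"

lemma zip_size_termination [termination_simp]:
  "(a, b) \<in> set (zip xs ts) \<Longrightarrow> size b < Suc (size_list size ts)"
  by (metis set_zip_rightD less_Suc_eq_le size_list_estimation' order_refl)

fun nnodes :: "tree \<Rightarrow> nat" where
  "nnodes (Node ts) = Suc (sum_list (map nnodes ts))"

definition deg :: "tree \<Rightarrow> nat" where
  "deg t = nnodes t - 1"

text \<open>Nodes are addressed by paths (lists of child positions, 0-based).
  postorder t lists all nodes in depth-first post-order; the root [] is last.
  The i-th node (1-based), i.e. u_i, is node t i.\<close>
fun postorder :: "tree \<Rightarrow> nat list list" where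
  "postorder (Node ts) =
     concat (map (\<lambda>(i, c). map ((#) i) (postorder c)) (zip [0..<length ts] ts)) @ [[]]"

definition node :: "tree \<Rightarrow> nat \<Rightarrow> nat list" where
  "node t i = postorder t ! (i - 1)"

text \<open>Deleting all nodes whose path fails P (children of a deleted node are
  attached, in order, to its parent in its place). Returns the resulting forest.\<close>
fun rforest :: "(nat list \<Rightarrow> bool) \<Rightarrow> nat list \<Rightarrow> tree \<Rightarrow> tree list" where
  "rforest P p (Node ts) =
     (let cs = concat (map (\<lambda>(i, c). rforest P (p @ [i]) c) (zip [0..<length ts] ts))
      in if P p then [Node cs] else cs)"

text \<open>t_A, for A a set of indices of non-root nodes (subset of {1..deg t}).\<close>
definition restrict :: "tree \<Rightarrow> nat set \<Rightarrow> tree" where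
  "restrict t A =
     Node (concat (map (\<lambda>(i, c). rforest (\<lambda>q. q \<in> node t ` A) [i] c)
                        (zip [0..<length (children t)] (children t))))"

definition tint :: "tree \<Rightarrow> nat \<Rightarrow> nat \<Rightarrow> tree" where
  "tint t i j = (if i \<le> j \<and> {i..j} \<inter> {1..deg t} \<noteq> {}
                 then restrict t ({i..j} \<inter> {1..deg t}) else odot)"

text \<open>A partition of a tree of degree n is encoded by its cut list
  [n_1, ..., n_k] with 0 = n_0 < n_1 < ... < n_k = n.\<close>
definition cuts :: "nat \<Rightarrow> nat list set" where
  "cuts n = {cs. cs \<noteq> [] \<and> sorted_wrt (<) cs \<and> 0 < hd cs \<and> last cs = n}"

text \<open>The l-th block (0-based l) of the partition given by cs.\<close>
definition block :: "tree \<Rightarrow> nat list \<Rightarrow> nat \<Rightarrow> tree" where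
  "block u cs l = tint u (if l = 0 then 1 else cs ! (l - 1) + 1) (cs ! l)"

text \<open>I(P,t): strictly increasing maps from the k blocks to the nodes of t
  (nodes given by their post-order index in {1..nnodes t}).\<close>
definition incmaps :: "tree \<Rightarrow> nat \<Rightarrow> nat list set" where
  "incmaps t k = {fs. length fs = k \<and> sorted_wrt (<) fs \<and> set fs \<subseteq> {1..nnodes t}}"

fun graft :: "(nat list \<Rightarrow> tree list) \<Rightarrow> nat list \<Rightarrow> tree \<Rightarrow> tree" where
  "graft g p (Node ts) =
     Node (map (\<lambda>(i, c). graft g (p @ [i]) c) (zip [0..<length ts] ts) @ g p)"

definition hash :: "tree \<Rightarrow> nat list \<Rightarrow> nat list \<Rightarrow> tree \<Rightarrow> tree" where
  "hash t cs fs u =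
     graft (\<lambda>p. concat (map (\<lambda>l. if node t (fs ! l) = p then children (block u cs l) else [])
                             [0..<length cs])) [] t"

text \<open>K[T_infinity] is rendered as finitely supported functions (poly_mapping).
  Product of two basis trees.\<close>
definition tprod :: "tree \<Rightarrow> tree \<Rightarrow> (tree \<Rightarrow>\<^sub>0 'k::field)" where
  "tprod t u = (if deg u = 0 then Poly_Mapping.single t 1
     else (\<Sum>cs\<in>cuts (deg u). \<Sum>fs\<in>incmaps t (length cs).
             Poly_Mapping.single (hash t cs fs u) 1))"

definition hmult :: "(tree \<Rightarrow>\<^sub>0 'k::field) \<Rightarrow> (tree \<Rightarrow>\<^sub>0 'k) \<Rightarrow> (tree \<Rightarrow>\<^sub>0 'k)" where
  "hmult x y = (\<Sum>t\<in>Poly_Mapping.keys x. \<Sum>u\<in>Poly_Mapping.keys y.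
                  Poly_Mapping.map (\<lambda>c. (Poly_Mapping.lookup x t * Poly_Mapping.lookup y u) * c) (tprod t u))"

end

theory Submission
  imports Defs
begin

text \<open>A tree is determined by the depths of its nodes in post-order, so trees are handled
  through their depth sequences. A partition of \<open>u\<close> together with an increasing map of its
  blocks to the nodes of \<open>t\<close> amounts to a weak composition of \<open>deg u\<close> into \<open>nnodes t\<close> parts,
  and the depth sequence of the hash product is the merge of the sequences of \<open>t\<close> and of the
  children of \<open>u\<close> along the word of that composition. Both \<open>(t * u) * v\<close> and \<open>t * (u * v)\<close>
  then become sums over words in three letters recording which of \<open>t, u, v\<close> each node comes
  from; the two ways of projecting such a word give the compositions of either bracketing, and
  an invariant of the nested merges shows that they produce the same depth sequence, hence
  the same tree. Associativity extends bilinearly, and \<open>odot\<close>, having a single node, is a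
  two-sided unit.\<close>

section \<open>Depth sequences\<close>

declare upt_Suc[simp del]

definition depths :: "tree \<Rightarrow> nat list" where
  "depths t = map length (postorder t)"

definition forest_depths :: "tree list \<Rightarrow> nat list" where
  "forest_depths ts = concat (map (\<lambda>c. map Suc (depths c)) ts)"

definition postorder_from :: "nat \<Rightarrow> tree list \<Rightarrow> nat list list" where
  "postorder_from k ts =
     concat (map (\<lambda>(i, c). map ((#) i) (postorder c)) (zip [k..<k + length ts] ts))"

lemma postorder_from_Nil [simp]: "postorder_from k [] = []"
  by (simp add: postorder_from_def)

lemma postorder_from_Cons [simp]:
  "postorder_from k (c # ts) = map ((#) k) (postorder c) @ postorder_from (Suc k) ts"
  by (simp add: postorder_from_def upt_conv_Cons)

lemma postorder_Node [simp]: "postorder (Node ts) = postorder_from 0 ts @ [[]]"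
  by (simp add: postorder_from_def)

declare postorder.simps[simp del]

lemma forest_depths_Nil [simp]: "forest_depths [] = []"
  by (simp add: forest_depths_def)

lemma forest_depths_Cons [simp]: "forest_depths (c # ts) = map Suc (depths c) @ forest_depths ts"
  by (simp add: forest_depths_def)

lemma forest_depths_append [simp]: "forest_depths (xs @ ys) = forest_depths xs @ forest_depths ys"
  by (simp add: forest_depths_def)

lemma forest_depths_concat: "forest_depths (concat tss) = concat (map forest_depths tss)"
  by (induction tss) auto

lemma map_length_postorder_from: "map length (postorder_from k ts) = forest_depths ts"
  by (induction ts arbitrary: k) (auto simp: depths_def)

lemma length_postorder_from: "length (postorder_from k ts) = length (forest_depths ts)"
  by (metis length_map map_length_postorder_from)

lemma depths_Node: "depths (Node ts) = forest_depths ts @ [0]"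
  by (simp add: depths_def map_length_postorder_from)

lemma Node_children: "Node (children t) = t"
  by (cases t) simp

lemma depths_eq_children: "depths t = forest_depths (children t) @ [0]"
  by (metis Node_children depths_Node)

lemma length_postorder: "length (postorder t) = nnodes t"
proof (induction t)
  case (Node ts)
  have "length (postorder_from k ts) = sum_list (map nnodes ts)" for k
    using Node by (induction ts arbitrary: k) auto
  then show ?case by simp
qed

lemma length_depths: "length (depths t) = nnodes t"
  by (simp add: depths_def length_postorder)

lemma nnodes_pos: "0 < nnodes t"
  by (cases t) simp

lemma nnodes_eq_Suc_deg: "nnodes t = Suc (deg t)"
  using nnodes_pos[of t] by (simp add: deg_def)

lemma deg_eq_length_forest_depths: "deg t = length (forest_depths (children t))"
  using length_depths[of t] by (simp add: deg_def depths_eq_children)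

lemma depths_ne [simp]: "depths t \<noteq> []"
  by (simp add: depths_eq_children)

lemma last_depths [simp]: "last (depths t) = 0"
  by (simp add: depths_eq_children)

lemma forest_depths_ge_1: "x \<in> set (forest_depths ts) \<Longrightarrow> 1 \<le> x"
  by (induction ts) auto

lemma last_forest_depths: "forest_depths ts \<noteq> [] \<Longrightarrow> last (forest_depths ts) = 1"
  by (induction ts) (auto simp: last_map last_append)

lemma postorder_from_hd: "q \<in> set (postorder_from k ts) \<Longrightarrow> q \<noteq> [] \<and> k \<le> hd q \<and> hd q < k + length ts"
  by (induction ts arbitrary: k) fastforce+

lemma distinct_postorder: "distinct (postorder t)"
proof (induction t)
  case (Node ts)
  have "distinct (postorder_from k ts)" for k
    using Node
  proof (induction ts arbitrary: k)
    case (Cons c ts)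
    have "set (map ((#) k) (postorder c)) \<inter> set (postorder_from (Suc k) ts) = {}"
      using postorder_from_hd[of _ "Suc k" ts] by fastforce
    with Cons show ?case by (simp add: distinct_map)
  qed simp
  moreover have "[] \<notin> set (postorder_from 0 ts)"
    using postorder_from_hd by blast
  ultimately show ?case by simp
qed

lemma append_1_Cons_inject:
  "A1 @ (1::nat) # R1 = A2 @ 1 # R2 \<Longrightarrow> 1 \<notin> set A1 \<Longrightarrow> 1 \<notin> set A2 \<Longrightarrow> A1 = A2 \<and> R1 = R2"
proof (induction A1 arbitrary: A2)
  case Nil then show ?case by (cases A2) auto
next
  case (Cons a A1) then show ?case by (cases A2) auto
qed

text \<open>In the depth sequence of a forest the entries equal to 1 are exactly the roots, which
  close the blocks of the successive trees; hence the sequence determines the forest.\<close>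
lemma depths_inject: "depths t1 = depths t2 \<Longrightarrow> t1 = t2"
proof (induction t1 arbitrary: t2)
  case (Node ts1)
  have split: "map Suc (depths c) = map Suc (forest_depths (children c)) @ [1]"
    "1 \<notin> set (map Suc (forest_depths (children c)))" for c
    using forest_depths_ge_1[of _ "children c"] by (auto simp: depths_eq_children)
  have "forest_depths ts1 = forest_depths ts2 \<Longrightarrow> ts1 = ts2" for ts2
    using Node.IH
  proof (induction ts1 arbitrary: ts2)
    case Nil then show ?case by (cases ts2) auto
  next
    case (Cons c1 ts1)
    then obtain c2 ts2' where ts2: "ts2 = c2 # ts2'" by (cases ts2) auto
    have "map Suc (forest_depths (children c1)) @ 1 # forest_depths ts1
        = map Suc (forest_depths (children c2)) @ 1 # forest_depths ts2'"
      using Cons.prems(1) ts2 split[of c1] split[of c2] by simp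
    then have "map Suc (forest_depths (children c1)) = map Suc (forest_depths (children c2))"
      and rest: "forest_depths ts1 = forest_depths ts2'"
      using append_1_Cons_inject split by blast+
    then have "depths c1 = depths c2" by (simp add: depths_eq_children)
    then show ?case using Cons rest ts2 by simp
  qed
  then show ?case
    using Node.prems by (metis Node_children depths_Node butlast_snoc)
qed

section \<open>Depths in a restricted forest\<close>

fun min_opt :: "nat option \<Rightarrow> nat \<Rightarrow> nat" where
  "min_opt None e = e"
| "min_opt (Some c) e = min c e"

fun suffix_min :: "nat option \<Rightarrow> nat list \<Rightarrow> nat option" where
  "suffix_min c [] = c"
| "suffix_min c (x # xs) = Some (min_opt (suffix_min c xs) x)"

text \<open>For a contiguous segment \<open>xs\<close> of a post-order depth sequence,
  \<open>rel_depths None xs\<close> is the depth sequence (roots at depth 1) of the forest induced on the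
  segment: in post-order the ancestors of a node come after it, so the ancestors lost by the
  restriction are counted by the minimal depth found after the node.\<close>
fun rel_depths :: "nat option \<Rightarrow> nat list \<Rightarrow> nat list" where
  "rel_depths c [] = []"
| "rel_depths c (x # xs) = (x + 1 - min_opt (suffix_min c xs) x) # rel_depths c xs"

lemma min_opt_le: "min_opt c e \<le> e"
  by (cases c) auto

lemma min_opt_ge: "(\<And>c'. c = Some c' \<Longrightarrow> a \<le> c') \<Longrightarrow> a \<le> x \<Longrightarrow> a \<le> min_opt c x"
  by (cases c) auto

lemma suffix_min_append: "suffix_min c (xs @ ys) = suffix_min (suffix_min c ys) xs"
  by (induction xs) auto

lemma rel_depths_append:
  "rel_depths c (xs @ ys) = rel_depths (suffix_min c ys) xs @ rel_depths c ys"
  by (induction xs) (auto simp: suffix_min_append)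

lemma drop_rel_depths: "drop k (rel_depths c xs) = rel_depths c (drop k xs)"
  by (induction xs arbitrary: k) (auto simp: drop_Cons split: nat.split)

lemma length_rel_depths [simp]: "length (rel_depths c xs) = length xs"
  by (induction xs) auto

lemma min_opt_Suc: "min_opt (map_option Suc c) (Suc x) = Suc (min_opt c x)"
  by (cases c) auto

lemma suffix_min_map_Suc:
  "suffix_min (map_option Suc c) (map Suc xs) = map_option Suc (suffix_min c xs)"
  by (induction xs) (auto simp: min_opt_Suc)

lemma rel_depths_map_Suc: "rel_depths (map_option Suc c) (map Suc xs) = rel_depths c xs"
  by (induction xs) (auto simp: suffix_min_map_Suc min_opt_Suc)

lemma suffix_min_last_0: "xs \<noteq> [] \<Longrightarrow> last xs = 0 \<Longrightarrow> suffix_min c xs = Some 0"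
proof (induction xs)
  case (Cons x xs)
  then show ?case by (cases "xs = []"; cases c) auto
qed simp

text \<open>A segment ending at the root is a union of complete subtrees.\<close>
lemma rel_depths_last_0: "xs \<noteq> [] \<Longrightarrow> last xs = 0 \<Longrightarrow> rel_depths c xs = map Suc xs"
proof (induction xs)
  case (Cons x xs)
  show ?case
  proof (cases "xs = []")
    case True then show ?thesis using Cons by (cases c) auto
  next
    case False then show ?thesis using Cons by (auto simp: suffix_min_last_0)
  qed
qed simp

lemma suffix_min_Some_0: "suffix_min (Some 0) xs = Some 0"
  by (induction xs) auto

lemma rel_depths_Some_0: "rel_depths (Some 0) xs = map Suc xs"
  by (induction xs) (auto simp: suffix_min_Some_0)

lemma suffix_min_ge:
  "(\<And>c'. c = Some c' \<Longrightarrow> a \<le> c') \<Longrightarrow> \<forall>x\<in>set xs. a \<le> x \<Longrightarrow> suffix_min c xs = Some c' \<Longrightarrow> a \<le> c'"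
  by (induction xs arbitrary: c') (auto intro!: min_opt_ge)

lemma suffix_min_forest:
  "xs \<noteq> [] \<Longrightarrow> \<forall>x\<in>set xs. 1 \<le> x \<Longrightarrow> last xs = 1 \<Longrightarrow> (\<And>c'. c = Some c' \<Longrightarrow> 1 \<le> c') \<Longrightarrow>
   suffix_min c xs = Some 1"
proof (induction xs)
  case (Cons x xs)
  then show ?case by (cases "xs = []"; cases c) (auto simp: min_def)
qed simp

lemma rel_depths_forest:
  "xs \<noteq> [] \<Longrightarrow> \<forall>x\<in>set xs. 1 \<le> x \<Longrightarrow> last xs = 1 \<Longrightarrow> (\<And>c'. c = Some c' \<Longrightarrow> 1 \<le> c') \<Longrightarrow>
   rel_depths c xs = xs"
proof (induction xs)
  case (Cons x xs)
  show ?case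
  proof (cases "xs = []")
    case True then show ?thesis using Cons by (cases c) (auto simp: min_def)
  next
    case False
    then have "suffix_min c xs = Some 1" using Cons.prems by (intro suffix_min_forest) auto
    then show ?thesis using Cons False by (auto simp: min_def)
  qed
qed simp

definition rforests :: "(nat list \<Rightarrow> bool) \<Rightarrow> nat list \<Rightarrow> nat \<Rightarrow> tree list \<Rightarrow> tree list" where
  "rforests P p k ts = concat (map (\<lambda>(i, c). rforest P (p @ [i]) c) (zip [k..<k + length ts] ts))"

lemma rforests_Nil [simp]: "rforests P p k [] = []"
  by (simp add: rforests_def)

lemma rforests_Cons [simp]:
  "rforests P p k (c # ts) = rforest P (p @ [k]) c @ rforests P p (Suc k) ts"
  by (simp add: rforests_def upt_conv_Cons)

lemma rforest_Node:
  "rforest P p (Node ts) = (if P p then [Node (rforests P p 0 ts)] else rforests P p 0 ts)"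
  by (simp add: rforests_def Let_def)

declare rforest.simps[simp del]

lemma rel_depths_Suc_depths_append:
  assumes "\<forall>x\<in>set xs. 1 \<le> x"
  shows "rel_depths None (map Suc (depths c) @ xs) = map Suc (depths c) @ rel_depths None xs"
proof -
  have "\<And>c'. suffix_min None xs = Some c' \<Longrightarrow> 1 \<le> c'"
    by (rule suffix_min_ge[of None]) (use assms in auto)
  then have "rel_depths (suffix_min None xs) (map Suc (depths c)) = map Suc (depths c)"
    by (intro rel_depths_forest) (auto simp: last_map)
  then show ?thesis by (simp add: rel_depths_append)
qed

definition selects_interval ::
    "(nat list \<Rightarrow> bool) \<Rightarrow> nat list \<Rightarrow> nat list list \<Rightarrow> nat \<Rightarrow> nat \<Rightarrow> bool" where
  "selects_interval P p qs lo hi \<longleftrightarrow> (\<forall>j<length qs. P (p @ qs ! j) \<longleftrightarrow> lo \<le> j \<and> j < hi)"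

lemma selects_interval_appendD:
  assumes "selects_interval P p (xs @ ys) lo hi"
  shows "selects_interval P p xs lo hi"
    and "selects_interval P p ys (lo - length xs) (hi - length xs)"
proof -
  show "selects_interval P p xs lo hi"
    unfolding selects_interval_def
  proof (intro allI impI)
    fix j assume "j < length xs"
    then show "P (p @ xs ! j) \<longleftrightarrow> lo \<le> j \<and> j < hi"
      using assms[unfolded selects_interval_def, rule_format, of j] by (simp add: nth_append)
  qed
  have "P (p @ ys ! j) \<longleftrightarrow> lo \<le> j + length xs \<and> j + length xs < hi" if "j < length ys" for j
    using that assms[unfolded selects_interval_def, rule_format, of "j + length xs"]
    by (simp add: nth_append)
  then show "selects_interval P p ys (lo - length xs) (hi - length xs)"
    by (auto simp: selects_interval_def)
qed

lemma selects_interval_map_Cons: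
  "selects_interval P p (map ((#) k) xs) lo hi \<longleftrightarrow> selects_interval P (p @ [k]) xs lo hi"
  by (simp add: selects_interval_def)

lemma forest_depths_rforests:
  assumes IH: "\<And>c p lo hi. c \<in> set ts \<Longrightarrow> selects_interval P p (postorder c) lo hi \<Longrightarrow>
      forest_depths (rforest P p c) = drop lo (rel_depths None (take hi (depths c)))"
    and sel: "selects_interval P p (postorder_from k ts) lo hi"
  shows "forest_depths (rforests P p k ts) = drop lo (rel_depths None (take hi (forest_depths ts)))"
  using IH sel
proof (induction ts arbitrary: k lo hi)
  case Nil then show ?case by simp
next
  case (Cons c ts)
  define n where "n = length (depths c)"
  note sel = selects_interval_appendD[OF Cons.prems(2)[unfolded postorder_from_Cons]]
  have head:
    "forest_depths (rforest P (p @ [k]) c) = drop lo (rel_depths None (take hi (depths c)))"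
    using Cons.prems(1) sel(1) by (simp add: selects_interval_map_Cons)
  have tail: "forest_depths (rforests P p (Suc k) ts)
      = drop (lo - n) (rel_depths None (take (hi - n) (forest_depths ts)))"
    using Cons.IH Cons.prems(1) sel(2) by (simp add: n_def depths_def)
  show ?case
  proof (cases "hi \<le> n")
    case True
    then have "take hi (forest_depths (c # ts)) = map Suc (take hi (depths c))"
      by (simp add: n_def take_map)
    then show ?thesis
      using head tail True rel_depths_map_Suc[of None] by simp
  next
    case False
    then have
      "take hi (forest_depths (c # ts)) = map Suc (depths c) @ take (hi - n) (forest_depths ts)"
      by (simp add: n_def)
    moreover have "\<forall>x\<in>set (take (hi - n) (forest_depths ts)). 1 \<le> x"
      by (auto dest!: in_set_takeD dest: forest_depths_ge_1)
    ultimately show ?thesis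
      using head tail False
      by (simp add: n_def rel_depths_Suc_depths_append rel_depths_last_0)
  qed
qed

lemma forest_depths_rforest:
  "selects_interval P p (postorder c) lo hi \<Longrightarrow>
   forest_depths (rforest P p c) = drop lo (rel_depths None (take hi (depths c)))"
proof (induction c arbitrary: p lo hi)
  case (Node ts)
  define n where "n = length (forest_depths ts)"
  note sel = selects_interval_appendD[OF Node.prems[unfolded postorder_Node]]
  have below:
    "forest_depths (rforests P p 0 ts) = drop lo (rel_depths None (take hi (forest_depths ts)))"
    using Node.IH sel(1) by (intro forest_depths_rforests) auto
  have root: "P p \<longleftrightarrow> lo \<le> n \<and> n < hi"
    using sel(2) by (auto simp: selects_interval_def n_def length_postorder_from)
  show ?case
  proof (cases "P p")
    case True
    then have "lo \<le> n" "n < hi" using root by auto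
    have "rel_depths None (forest_depths ts) = forest_depths ts"
      by (cases "forest_depths ts = []")
        (auto intro!: rel_depths_forest forest_depths_ge_1 last_forest_depths)
    moreover have "take hi (forest_depths ts @ [0]) = forest_depths ts @ [0]"
      using \<open>n < hi\<close> n_def by simp
    ultimately show ?thesis
      using True below \<open>lo \<le> n\<close> \<open>n < hi\<close>
      by (simp add: rforest_Node depths_Node rel_depths_append rel_depths_Some_0 n_def drop_map)
  next
    case False
    then show ?thesis
      using root below by (auto simp: rforest_Node depths_Node n_def)
  qed
qed

lemma selects_interval_node_image:
  assumes "1 \<le> a" "b \<le> nnodes t"
  shows "selects_interval (\<lambda>q. q \<in> node t ` {a..b}) [] (postorder t) (a - 1) b"
  unfolding selects_interval_def
proof (intro allI impI)
  fix j assume j: "j < length (postorder t)"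
  have "postorder t ! j \<in> node t ` {a..b} \<longleftrightarrow> (\<exists>i\<in>{a..b}. postorder t ! j = postorder t ! (i - 1))"
    by (auto simp: node_def)
  also have "\<dots> \<longleftrightarrow> (\<exists>i\<in>{a..b}. j = i - 1)"
  proof
    assume "\<exists>i\<in>{a..b}. postorder t ! j = postorder t ! (i - 1)"
    then obtain i where "i \<in> {a..b}" "postorder t ! j = postorder t ! (i - 1)" by blast
    then show "\<exists>i\<in>{a..b}. j = i - 1"
      using j assms distinct_postorder[of t] by (auto simp: nth_eq_iff_index_eq length_postorder)
  qed auto
  also have "\<dots> \<longleftrightarrow> a - 1 \<le> j \<and> j < b"
    using assms by (auto intro: bexI[of _ "Suc j"])
  finally show "[] @ postorder t ! j \<in> node t ` {a..b} \<longleftrightarrow> a - 1 \<le> j \<and> j < b" by simp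
qed

lemma postorder_nth_deg: "postorder t ! deg t = []"
  by (subst Node_children[symmetric])
    (simp add: nth_append length_postorder_from deg_eq_length_forest_depths
      del: postorder_from_Cons)

lemma forest_depths_tint:
  assumes "1 \<le> a" "a \<le> b" "b \<le> deg u"
  shows "forest_depths (children (tint u a b))
       = drop (a - 1) (rel_depths None (take b (forest_depths (children u))))"
proof -
  define P where "P = (\<lambda>q. q \<in> node u ` {a..b})"
  have sel: "selects_interval P [] (postorder u) (a - 1) b"
    using assms selects_interval_node_image[of a b u] by (simp add: P_def nnodes_eq_Suc_deg)
  then have "\<not> P []"
    using postorder_nth_deg[of u] assms
    by (auto simp: selects_interval_def length_postorder nnodes_eq_Suc_deg dest: spec[of _ "deg u"])
  with forest_depths_rforest[OF sel]
  have "forest_depths (rforests P [] 0 (children u))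
      = drop (a - 1) (rel_depths None (take b (depths u)))"
    by (metis Node_children rforest_Node)
  moreover have "take b (depths u) = take b (forest_depths (children u))"
    using assms by (simp add: depths_eq_children deg_eq_length_forest_depths)
  moreover have "tint u a b = Node (rforests P [] 0 (children u))"
    using assms by (auto simp: tint_def restrict_def rforests_def P_def Int_absorb2)
  ultimately show ?thesis by simp
qed

section \<open>Grafting\<close>

lemma depths_graft:
  "depths (graft g p t)
     = concat (map (\<lambda>q. map ((+) (length q)) (forest_depths (g (p @ q))) @ [length q])
                   (postorder t))"
proof (induction t arbitrary: p)
  case (Node ts)
  let ?F = "\<lambda>q. map ((+) (length q)) (forest_depths (g (p @ q))) @ [length q]"
  have "forest_depths (map (\<lambda>(i, c). graft g (p @ [i]) c) (zip [k..<k + length ts] ts))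
      = concat (map ?F (postorder_from k ts))" for k
    using Node
  proof (induction ts arbitrary: k)
    case (Cons c ts)
    have Suc_plus: "(\<lambda>x. Suc (a + x)) = (+) (Suc a)" for a :: nat
      by auto
    have "map Suc (depths (graft g (p @ [k]) c)) = concat (map ?F (map ((#) k) (postorder c)))"
      using Cons.prems[of c "p @ [k]"] by (simp add: map_concat comp_def Suc_plus)
    moreover have
      "forest_depths (map (\<lambda>(i, c). graft g (p @ [i]) c) (zip [Suc k..<Suc k + length ts] ts))
        = concat (map ?F (postorder_from (Suc k) ts))"
      using Cons.IH[of "Suc k"] Cons.prems by simp
    ultimately show ?case by (simp add: upt_conv_Cons)
  qed simp
  from this[of 0] show ?case by (simp add: depths_Node map_idI)
qed

section \<open>Partitions with increasing maps as compositions\<close>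

text \<open>A pair of a partition of \<open>u\<close> (its cut list) and an increasing map of its blocks to the
  nodes of \<open>t\<close> is encoded by the weak composition \<open>ks\<close> of \<open>deg u\<close> into \<open>nnodes t\<close> parts whose
  \<open>j\<close>-th entry is the size of the block sent to the \<open>j\<close>-th node (zero if there is none).
  The decoding below starts at node \<open>i\<close> with \<open>s\<close> nodes of \<open>u\<close> already used.\<close>
fun partition_of_comp :: "nat \<Rightarrow> nat \<Rightarrow> nat list \<Rightarrow> nat list \<times> nat list" where
  "partition_of_comp i s [] = ([], [])"
| "partition_of_comp i s (k # ks) =
     (if k = 0 then partition_of_comp (Suc i) s ks
      else (case partition_of_comp (Suc i) (s + k) ks of (cs, fs) \<Rightarrow> ((s + k) # cs, i # fs)))"

definition compositions :: "nat \<Rightarrow> nat \<Rightarrow> nat list set" where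
  "compositions m n = {ks. length ks = m \<and> sum_list ks = n}"

lemma length_partition_of_comp:
  "length (fst (partition_of_comp i s ks)) = length (snd (partition_of_comp i s ks))"
  by (induction i s ks rule: partition_of_comp.induct) (auto split: prod.split)

lemma partition_of_comp_cuts:
  "(\<forall>x\<in>set (fst (partition_of_comp i s ks)). s < x)
   \<and> sorted_wrt (<) (fst (partition_of_comp i s ks))"
proof (induction i s ks rule: partition_of_comp.induct)
  case (2 i s k ks)
  obtain cs fs where "partition_of_comp (Suc i) (s + k) ks = (cs, fs)" by fastforce
  with 2 show ?case by (cases "k = 0") fastforce+
qed simp

lemma partition_of_comp_nodes:
  "(\<forall>x\<in>set (snd (partition_of_comp i s ks)). i \<le> x \<and> x < i + length ks)
   \<and> sorted_wrt (<) (snd (partition_of_comp i s ks))"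
proof (induction i s ks rule: partition_of_comp.induct)
  case (2 i s k ks)
  obtain cs fs where "partition_of_comp (Suc i) (s + k) ks = (cs, fs)" by fastforce
  with 2 show ?case by (cases "k = 0") fastforce+
qed simp

lemma partition_of_comp_last:
  "(fst (partition_of_comp i s ks) = [] \<longleftrightarrow> sum_list ks = 0) \<and>
   (fst (partition_of_comp i s ks) \<noteq> [] \<longrightarrow> last (fst (partition_of_comp i s ks)) = s + sum_list ks)"
  by (induction i s ks rule: partition_of_comp.induct)
    (auto split: prod.split simp del: sum_list_eq_0_iff)

lemma hd_node_partition_of_comp:
  "i \<in> set (snd (partition_of_comp i s (k # ks))) \<longleftrightarrow> k \<noteq> 0"
proof -
  have "\<forall>x\<in>set (snd (partition_of_comp (Suc i) s' ks)). i < x" for s'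
    using partition_of_comp_nodes[of "Suc i" s' ks] by auto
  then show ?thesis by (auto split: prod.split)
qed

lemma partition_of_comp_inj:
  "partition_of_comp i s ks1 = partition_of_comp i s ks2 \<Longrightarrow> length ks1 = length ks2 \<Longrightarrow> ks1 = ks2"
proof (induction i s ks1 arbitrary: ks2 rule: partition_of_comp.induct)
  case (2 i s k ks)
  then obtain k2 ks2' where ks2: "ks2 = k2 # ks2'" by (cases ks2) auto
  have "k = 0 \<longleftrightarrow> k2 = 0"
    using hd_node_partition_of_comp[of i s k ks] hd_node_partition_of_comp[of i s k2 ks2'] 2(3) ks2
    by metis
  show ?case
  proof (cases "k = 0")
    case True
    then show ?thesis using 2 ks2 \<open>k = 0 \<longleftrightarrow> k2 = 0\<close> by auto
  next
    case False
    obtain cs1 fs1 where e1: "partition_of_comp (Suc i) (s + k) ks = (cs1, fs1)" by fastforce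
    obtain cs2 fs2 where e2: "partition_of_comp (Suc i) (s + k2) ks2' = (cs2, fs2)" by fastforce
    have "((s + k) # cs1, i # fs1) = ((s + k2) # cs2, i # fs2)"
      using 2(3) False \<open>k = 0 \<longleftrightarrow> k2 = 0\<close> ks2 e1 e2 by simp
    then have "k = k2" and "partition_of_comp (Suc i) (s + k) ks
        = partition_of_comp (Suc i) (s + k) ks2'"
      using e1 e2 by auto
    then show ?thesis using 2(2)[OF False] 2(4) ks2 by auto
  qed
qed simp

lemma partition_of_comp_surj:
  "length cs = length fs \<Longrightarrow> sorted_wrt (<) cs \<Longrightarrow> \<forall>x\<in>set cs. s < x \<Longrightarrow> sorted_wrt (<) fs \<Longrightarrow>
   \<forall>x\<in>set fs. i \<le> x \<and> x < i + L \<Longrightarrow> \<exists>ks. length ks = L \<and> partition_of_comp i s ks = (cs, fs)"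
proof (induction L arbitrary: i s cs fs)
  case 0
  then show ?case by (cases fs) auto
next
  case (Suc L)
  show ?case
  proof (cases "fs \<noteq> [] \<and> hd fs = i")
    case True
    then obtain f fs' where fs: "fs = f # fs'" "f = i" by (cases fs) auto
    then obtain c cs' where cs: "cs = c # cs'" using Suc.prems(1) by (cases cs) auto
    have "\<exists>ks. length ks = L \<and> partition_of_comp (Suc i) c ks = (cs', fs')"
      using Suc.prems fs cs by (intro Suc.IH) auto
    then obtain ks where "length ks = L" "partition_of_comp (Suc i) c ks = (cs', fs')" by blast
    moreover have "c - s \<noteq> 0" "s + (c - s) = c" using Suc.prems(3) cs by auto
    ultimately show ?thesis using fs cs by (intro exI[of _ "(c - s) # ks"]) auto
  next
    case False
    have "\<forall>x\<in>set fs. Suc i \<le> x \<and> x < Suc i + L"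
    proof
      fix x assume x: "x \<in> set fs"
      then obtain f fs' where fs: "fs = f # fs'" by (cases fs) auto
      have "i < f" using False fs Suc.prems(5) by fastforce
      moreover have "x = f \<or> f < x" using x fs Suc.prems(4) by auto
      ultimately show "Suc i \<le> x \<and> x < Suc i + L" using Suc.prems(5) x by auto
    qed
    then have "\<exists>ks. length ks = L \<and> partition_of_comp (Suc i) s ks = (cs, fs)"
      using Suc.prems by (intro Suc.IH) auto
    then obtain ks where "length ks = L" "partition_of_comp (Suc i) s ks = (cs, fs)" by blast
    then show ?thesis by (intro exI[of _ "0 # ks"]) auto
  qed
qed

lemma strict_sorted_all_gr_iff_hd:
  "sorted_wrt (<) (xs::nat list) \<Longrightarrow> xs \<noteq> [] \<Longrightarrow> (\<forall>x\<in>set xs. a < x) \<longleftrightarrow> a < hd xs"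
  by (cases xs) auto

lemma bij_betw_partition_of_comp:
  assumes "0 < n"
  shows "bij_betw (partition_of_comp 1 0) (compositions (nnodes t) n)
           (Sigma (cuts n) (\<lambda>cs. incmaps t (length cs)))"
proof (rule bij_betwI')
  fix x y assume "x \<in> compositions (nnodes t) n" "y \<in> compositions (nnodes t) n"
  then show "(partition_of_comp 1 0 x = partition_of_comp 1 0 y) = (x = y)"
    using partition_of_comp_inj[of 1 0 x y] by (auto simp: compositions_def)
next
  fix ks assume ks: "ks \<in> compositions (nnodes t) n"
  obtain cs fs where cf: "partition_of_comp 1 0 ks = (cs, fs)" by fastforce
  have "cs \<noteq> []" "last cs = n"
    using partition_of_comp_last[of 1 0 ks] cf ks assms
    by (auto simp: compositions_def simp del: sum_list_eq_0_iff)
  moreover have "sorted_wrt (<) cs" "\<forall>x\<in>set cs. 0 < x"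
    using partition_of_comp_cuts[of 1 0 ks] cf by auto
  moreover have "sorted_wrt (<) fs" "set fs \<subseteq> {1..nnodes t}" "length fs = length cs"
    using partition_of_comp_nodes[of 1 0 ks] length_partition_of_comp[of 1 0 ks] cf ks
    by (auto simp: compositions_def)
  ultimately show "partition_of_comp 1 0 ks \<in> Sigma (cuts n) (\<lambda>cs. incmaps t (length cs))"
    using cf strict_sorted_all_gr_iff_hd[of cs 0] by (auto simp: cuts_def incmaps_def)
next
  fix p assume p: "p \<in> Sigma (cuts n) (\<lambda>cs. incmaps t (length cs))"
  obtain cs fs where pp: "p = (cs, fs)" by fastforce
  have c: "cs \<noteq> []" "sorted_wrt (<) cs" "0 < hd cs" "last cs = n"
    and f: "length fs = length cs" "sorted_wrt (<) fs" "set fs \<subseteq> {1..nnodes t}"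
    using p pp by (auto simp: cuts_def incmaps_def)
  have "\<exists>ks. length ks = nnodes t \<and> partition_of_comp 1 0 ks = (cs, fs)"
    using c f strict_sorted_all_gr_iff_hd[of cs 0] by (intro partition_of_comp_surj) auto
  then obtain ks where ks: "length ks = nnodes t" "partition_of_comp 1 0 ks = (cs, fs)" by blast
  then have "sum_list ks = n"
    using partition_of_comp_last[of 1 0 ks] c by (simp del: sum_list_eq_0_iff)
  then show "\<exists>ks\<in>compositions (nnodes t) n. p = partition_of_comp 1 0 ks"
    using ks pp by (auto simp: compositions_def)
qed

lemma strict_sorted_nth_le_last:
  assumes "sorted_wrt (<) (xs :: nat list)" "l < length xs"
  shows "xs ! l \<le> last xs"
proof -
  have "last xs = xs ! (length xs - 1)"
    using assms(2) by (intro last_conv_nth) auto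
  moreover have "l < length xs - 1 \<Longrightarrow> xs ! l < xs ! (length xs - 1)"
    using assms by (simp add: sorted_wrt_iff_nth_less)
  ultimately show ?thesis
    using assms(2) by (cases "l = length xs - 1") (auto simp: less_imp_le)
qed

lemma finite_strict_sorted_lists:
  "finite A \<Longrightarrow> finite {xs :: nat list. sorted_wrt (<) xs \<and> set xs \<subseteq> A}"
proof -
  assume "finite A"
  have "inj_on set {xs :: nat list. sorted_wrt (<) xs \<and> set xs \<subseteq> A}"
    by (rule inj_onI) (auto intro: strict_sorted_equal)
  moreover have "set ` {xs :: nat list. sorted_wrt (<) xs \<and> set xs \<subseteq> A} \<subseteq> Pow A"
    by auto
  ultimately show ?thesis
    using \<open>finite A\<close> by (meson finite_Pow_iff finite_imageD finite_subset)
qed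

lemma finite_cuts: "finite (cuts n)"
proof (rule finite_subset[OF _ finite_strict_sorted_lists[of "{0..n}"]])
  show "cuts n \<subseteq> {xs. sorted_wrt (<) xs \<and> set xs \<subseteq> {0..n}}"
    by (auto simp: cuts_def in_set_conv_nth dest: strict_sorted_nth_le_last)
qed simp

lemma finite_incmaps: "finite (incmaps t k)"
  by (rule finite_subset[OF _ finite_strict_sorted_lists[of "{1..nnodes t}"]])
    (auto simp: incmaps_def)

definition hash_comp :: "tree \<Rightarrow> nat list \<Rightarrow> tree \<Rightarrow> tree" where
  "hash_comp t ks u = hash t (fst (partition_of_comp 1 0 ks)) (snd (partition_of_comp 1 0 ks)) u"

lemma tprod_eq_sum_compositions:
  assumes "0 < deg u"
  shows "tprod t u
           = (\<Sum>ks\<in>compositions (nnodes t) (deg u). Poly_Mapping.single (hash_comp t ks u) 1)"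
proof -
  have "tprod t u = (\<Sum>cs\<in>cuts (deg u). \<Sum>fs\<in>incmaps t (length cs).
                       Poly_Mapping.single (hash t cs fs u) 1)"
    using assms by (simp add: tprod_def)
  also have "\<dots> = (\<Sum>p\<in>Sigma (cuts (deg u)) (\<lambda>cs. incmaps t (length cs)).
                      Poly_Mapping.single (hash t (fst p) (snd p) u) 1)"
    by (subst sum.Sigma) (auto simp: finite_cuts finite_incmaps split_beta)
  also have "\<dots> = (\<Sum>ks\<in>compositions (nnodes t) (deg u). Poly_Mapping.single (hash_comp t ks u) 1)"
    by (simp add: hash_comp_def
        sum.reindex_bij_betw[OF bij_betw_partition_of_comp[OF assms], symmetric])
  finally show ?thesis .
qed

section \<open>The depth sequence of a hash product\<close>

text \<open>\<open>D\<close> is the depth sequence of \<open>t\<close> and \<open>E\<close> that of the forest of children of \<open>u\<close>; below the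
  \<open>j\<close>-th node of \<open>t\<close>, of depth \<open>d\<close>, the next \<open>k\<close> nodes of \<open>E\<close> are grafted as a restricted
  forest.\<close>
fun hash_depths :: "nat list \<Rightarrow> nat list \<Rightarrow> nat list \<Rightarrow> nat list" where
  "hash_depths (d # D) E (k # ks)
      = map ((+) d) (rel_depths None (take k E)) @ d # hash_depths D (drop k E) ks"
| "hash_depths _ _ _ = []"

lemma length_hash_depths:
  "length D = length ks \<Longrightarrow> length E = sum_list ks \<Longrightarrow>
   length (hash_depths D E ks) = length D + sum_list ks"
  by (induction D E ks rule: hash_depths.induct) auto

lemma concat_map_zip_no_match:
  "\<forall>x\<in>set fs. x \<noteq> v \<Longrightarrow>
   concat (map (\<lambda>(c, f, lo). if f = v then X c lo else []) (zip cs (zip fs L))) = []"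
proof -
  assume no: "\<forall>x\<in>set fs. x \<noteq> v"
  have "fst (snd x) \<noteq> v" if x: "x \<in> set (zip cs (zip fs L))" for x
  proof -
    obtain c f lo where "x = (c, f, lo)" by (cases x) auto
    with x have "f \<in> set fs" by (blast dest: set_zip_rightD set_zip_leftD)
    with no \<open>x = (c, f, lo)\<close> show ?thesis by auto
  qed
  then show ?thesis by auto
qed

lemma hash_depths_partition_of_comp:
  "length D = length ks \<Longrightarrow>
   hash_depths D (drop s E) ks
     = concat (map (\<lambda>j. map ((+) (D ! j))
          (concat (map (\<lambda>(c, f, lo). if f = i + j then rel_depths None (drop lo (take c E)) else [])
             (zip (fst (partition_of_comp i s ks))
                  (zip (snd (partition_of_comp i s ks)) (s # fst (partition_of_comp i s ks))))))
          @ [D ! j]) [0..<length ks])"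
proof (induction ks arbitrary: i s D)
  case (Cons k ks)
  then obtain d D' where D: "D = d # D'" by (cases D) auto
  have upt: "[0..<Suc n] = 0 # map Suc [0..<n]" for n
    by (simp add: upt_conv_Cons map_Suc_upt)
  have not_i: "\<forall>x\<in>set (snd (partition_of_comp (Suc i) s' ks)). x \<noteq> i" for s'
    using partition_of_comp_nodes[of "Suc i" s' ks] by fastforce
  show ?case
  proof (cases "k = 0")
    case True
    then show ?thesis
      using Cons.IH[of D' s "Suc i"] Cons.prems D concat_map_zip_no_match[OF not_i[of s]]
      by (simp add: upt comp_def)
  next
    case False
    obtain cs fs where e: "partition_of_comp (Suc i) (s + k) ks = (cs, fs)" by fastforce
    have "take k (drop s E) = drop s (take (s + k) E)" "drop k (drop s E) = drop (s + k) E"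
      by (simp_all add: take_drop add.commute)
    then show ?thesis
      using False Cons.IH[of D' "s + k" "Suc i"] Cons.prems D e
        concat_map_zip_no_match[OF not_i[of "s + k"]]
      by (simp add: upt comp_def)
  qed
qed simp

lemma forest_depths_block:
  assumes "cs \<in> cuts (deg u)" "l < length cs"
  shows "forest_depths (children (block u cs l))
       = rel_depths None (drop ((0 # cs) ! l) (take (cs ! l) (forest_depths (children u))))"
proof -
  have cs: "sorted_wrt (<) cs" "cs \<noteq> []" "0 < hd cs" "last cs = deg u"
    using assms(1) by (auto simp: cuts_def)
  have "(0 # cs) ! l < cs ! l"
  proof (cases l)
    case (Suc l')
    then show ?thesis using cs(1) assms(2) by (simp add: sorted_wrt_iff_nth_less)
  next
    case 0
    then show ?thesis using cs by (cases cs) auto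
  qed
  moreover have "cs ! l \<le> deg u"
    using strict_sorted_nth_le_last[OF cs(1) assms(2)] cs by simp
  moreover have "block u cs l = tint u ((0 # cs) ! l + 1) (cs ! l)"
    by (cases l) (auto simp: block_def)
  ultimately show ?thesis
    using forest_depths_tint[of "(0 # cs) ! l + 1" "cs ! l" u] by (simp add: drop_rel_depths)
qed

lemma forest_depths_grafted_at_node:
  assumes cut: "cs \<in> cuts (deg u)" and inc: "fs \<in> incmaps t (length cs)" and j: "j < nnodes t"
  defines "E \<equiv> forest_depths (children u)"
  shows "forest_depths (concat (map (\<lambda>l. if node t (fs ! l) = postorder t ! j
                                           then children (block u cs l) else []) [0..<length cs]))
       = concat (map (\<lambda>(c, f, lo). if f = 1 + j then rel_depths None (drop lo (take c E)) else [])
                     (zip cs (zip fs (0 # cs))))"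
    (is "forest_depths (concat ?g) = concat ?s")
proof -
  have lfs: "length fs = length cs" and fsr: "set fs \<subseteq> {1..nnodes t}"
    using inc by (auto simp: incmaps_def)
  have node_eq: "node t (fs ! l) = postorder t ! j \<longleftrightarrow> fs ! l = 1 + j" if "l < length cs" for l
  proof -
    have "fs ! l \<in> {1..nnodes t}" using fsr that lfs by (metis nth_mem subsetD)
    then show ?thesis
      using j distinct_postorder[of t] by (auto simp: node_def length_postorder nth_eq_iff_index_eq)
  qed
  have "forest_depths (concat ?g)
      = concat (map (\<lambda>l. if fs ! l = 1 + j
                          then rel_depths None (drop ((0 # cs) ! l) (take (cs ! l) E)) else [])
                    [0..<length cs])"
    unfolding forest_depths_concat map_map
    by (rule arg_cong[where f = concat], rule map_cong)
      (auto simp: node_eq forest_depths_block[OF cut] E_def)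
  also have "\<dots> = concat ?s"
    by (rule arg_cong[where f = concat], rule nth_equalityI) (auto simp: lfs)
  finally show ?thesis .
qed

lemma depths_hash_comp:
  assumes ks: "ks \<in> compositions (nnodes t) (deg u)" and u: "0 < deg u"
  shows "depths (hash_comp t ks u) = hash_depths (depths t) (forest_depths (children u)) ks"
proof -
  define E where "E = forest_depths (children u)"
  define m where "m = nnodes t"
  obtain cs fs where cf: "partition_of_comp 1 0 ks = (cs, fs)" by fastforce
  have cut: "cs \<in> cuts (deg u)" and inc: "fs \<in> incmaps t (length cs)"
    using bij_betw_apply[OF bij_betw_partition_of_comp[OF u, of t] ks] cf by auto
  define g where "g = (\<lambda>p. concat (map (\<lambda>l.
      if node t (fs ! l) = p then children (block u cs l) else []) [0..<length cs]))"
  have "depths (hash_comp t ks u)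
      = concat (map (\<lambda>q. map ((+) (length q)) (forest_depths (g q)) @ [length q]) (postorder t))"
    unfolding hash_comp_def cf by (simp add: hash_def g_def depths_graft)
  also have "\<dots> = concat (map (\<lambda>j. map ((+) (length (postorder t ! j)))
        (forest_depths (g (postorder t ! j))) @ [length (postorder t ! j)]) [0..<m])"
    by (subst map_nth[of "postorder t", symmetric]) (simp add: m_def comp_def length_postorder)
  also have "\<dots> = concat (map (\<lambda>j. map ((+) (depths t ! j))
      (concat (map (\<lambda>(c, f, lo). if f = 1 + j then rel_depths None (drop lo (take c E)) else [])
                   (zip cs (zip fs (0 # cs))))) @ [depths t ! j]) [0..<m])"
    unfolding g_def E_def
    by (rule arg_cong[where f = concat], rule map_cong)
      (simp_all add: forest_depths_grafted_at_node[OF cut inc] m_def depths_def length_postorder)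
  also have "\<dots> = hash_depths (depths t) (drop 0 E) ks"
    using hash_depths_partition_of_comp[of "depths t" ks 0 E 1] cf ks
    by (simp add: m_def compositions_def length_depths)
  finally show ?thesis by (simp add: E_def)
qed

section \<open>Reading depth sequences backwards\<close>

fun rev_rel_depths :: "nat option \<Rightarrow> nat list \<Rightarrow> nat list" where
  "rev_rel_depths c [] = []"
| "rev_rel_depths c (e # es) = (e + 1 - min_opt c e) # rev_rel_depths (Some (min_opt c e)) es"

lemma rev_rel_depths: "rev (rel_depths c xs) = rev_rel_depths c (rev xs)"
proof (induction xs arbitrary: c rule: rev_induct)
  case (snoc x xs)
  then show ?case by (simp add: rel_depths_append)
qed simp

text \<open>Reversed depth sequence of a hash product, produced by merging the reversed sequences
  \<open>D\<close> of \<open>t\<close> and \<open>E\<close> of the children of \<open>u\<close> as directed by a word: \<open>False\<close> takes the next node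
  of \<open>t\<close>, \<open>True\<close> the next node of \<open>u\<close>, which is grafted below the last node taken from \<open>t\<close>.
  The state holds the depth of that node and the minimal depth met since then.\<close>
fun merge_depths :: "nat \<times> nat option \<Rightarrow> bool list \<Rightarrow> nat list \<Rightarrow> nat list \<Rightarrow> nat list" where
  "merge_depths st (False # w) (d # D) E = d # merge_depths (d, None) w D E"
| "merge_depths (a, mn) (True # w) D (e # E) =
     (a + 1 + e - min_opt mn e) # merge_depths (a, Some (min_opt mn e)) w D E"
| "merge_depths _ _ _ _ = []"

lemma merge_depths_replicate_True:
  "length X = k \<Longrightarrow> merge_depths (d, mn) (replicate k True) [] X = map ((+) d) (rev_rel_depths mn X)"
proof (induction X arbitrary: k mn)
  case (Cons e X)
  then show ?case using min_opt_le[of mn e] by (cases k) auto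
qed simp

lemma merge_depths_append:
  "length (filter Not w1) = length D1 \<Longrightarrow> length (filter id w1) = length E1 \<Longrightarrow>
   w2 = [] \<or> hd w2 = False \<Longrightarrow>
   merge_depths st (w1 @ w2) (D1 @ D2) (E1 @ E2)
     = merge_depths st w1 D1 E1 @ merge_depths st' w2 D2 E2"
proof (induction w1 arbitrary: st D1 E1)
  case Nil
  then show ?case by (cases w2; cases D2) auto
next
  case (Cons b w1)
  obtain a mn where st: "st = (a, mn)" by fastforce
  show ?case
  proof (cases b)
    case True
    then obtain e E1' where "E1 = e # E1'" using Cons.prems by (cases E1) auto
    then show ?thesis using Cons True st by simp
  next
    case False
    then obtain d D1' where "D1 = d # D1'" using Cons.prems by (cases D1) auto
    then show ?thesis using Cons False st by simp
  qed
qed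

definition comp_word :: "nat list \<Rightarrow> bool list" where
  "comp_word ks = concat (map (\<lambda>k. replicate k True @ [False]) ks)"

lemma comp_word_Nil [simp]: "comp_word [] = []"
  and comp_word_Cons [simp]: "comp_word (k # ks) = replicate k True @ False # comp_word ks"
  by (auto simp: comp_word_def)

lemma comp_word_counts:
  "length (filter Not (comp_word ks)) = length ks"
  "length (filter id (comp_word ks)) = sum_list ks"
  by (induction ks) auto

lemma rev_hash_depths:
  "length D = length ks \<Longrightarrow> length E = sum_list ks \<Longrightarrow>
   rev (hash_depths D E ks) = merge_depths st (rev (comp_word ks)) (rev D) (rev E)"
proof (induction ks arbitrary: D E st rule: rev_induct)
  case Nil then show ?case by simp
next
  case (snoc k ks)
  obtain D' d where D: "D = D' @ [d]" using snoc.prems by (cases D rule: rev_cases) auto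
  define E1 where "E1 = take (sum_list ks) E"
  define E2 where "E2 = drop (sum_list ks) E"
  have E: "E = E1 @ E2" "length E1 = sum_list ks" "length E2 = k"
    using snoc.prems by (auto simp: E1_def E2_def)
  have snoc_hash_depths: "hash_depths (D' @ [d]) (E1 @ E2) (ks @ [k])
      = hash_depths D' E1 ks @ map ((+) d) (rel_depths None E2) @ [d]"
    if "length D' = length ks" "length E1 = sum_list ks" "length E2 = k" for D' E1 E2 d
    using that by (induction D' E1 ks rule: hash_depths.induct) auto
  have "rev (hash_depths D E (ks @ [k]))
      = d # map ((+) d) (rev (rel_depths None E2)) @ rev (hash_depths D' E1 ks)"
    using snoc_hash_depths[of D' E1 E2 d] D E snoc.prems by (simp add: rev_map)
  also have "\<dots> = merge_depths st (False # replicate k True) [d] (rev E2)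
                  @ merge_depths st (rev (comp_word ks)) (rev D') (rev E1)"
    using snoc.IH[of D' E1 st] D E snoc.prems merge_depths_replicate_True[of "rev E2" k d None]
    by (simp add: rev_rel_depths)
  also have "\<dots> = merge_depths st (rev (comp_word (ks @ [k]))) (rev D) (rev E)"
  proof -
    have "rev (comp_word (ks @ [k])) = (False # replicate k True) @ rev (comp_word ks)"
      by (simp add: comp_word_def)
    moreover have "rev (comp_word ks) = [] \<or> hd (rev (comp_word ks)) = False"
      by (cases ks rule: rev_cases) (auto simp: comp_word_def)
    ultimately show ?thesis
      using merge_depths_append[of "False # replicate k True" "[d]" "rev E2" "rev (comp_word ks)" st
          "rev D'" "rev E1" st] D E
      by simp
  qed
  finally show ?case .
qed

lemma
  assumes "ks \<in> compositions (nnodes t) (deg u)" "0 < deg u"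
  shows rev_depths_hash_comp: "rev (depths (hash_comp t ks u))
            = merge_depths st (rev (comp_word ks)) (rev (depths t))
                (rev (forest_depths (children u)))"
    and nnodes_hash_comp: "nnodes (hash_comp t ks u) = nnodes t + deg u"
proof -
  have len: "length (depths t) = length ks" "length (forest_depths (children u)) = sum_list ks"
    using assms(1) by (auto simp: compositions_def length_depths deg_eq_length_forest_depths)
  then show "rev (depths (hash_comp t ks u))
      = merge_depths st (rev (comp_word ks)) (rev (depths t)) (rev (forest_depths (children u)))"
    using rev_hash_depths depths_hash_comp[OF assms] by simp
  show "nnodes (hash_comp t ks u) = nnodes t + deg u"
    using length_hash_depths[OF len] depths_hash_comp[OF assms] length_depths[of "hash_comp t ks u"]
      length_depths[of t] assms(1)
    by (simp add: compositions_def)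
qed

section \<open>Associativity of merging\<close>

fun omin :: "nat option \<Rightarrow> nat option \<Rightarrow> nat option" where
  "omin None y = y"
| "omin x None = x"
| "omin (Some a) (Some b) = Some (min a b)"

lemma omin_None_right [simp]: "omin c None = c"
  by (cases c) auto

fun up_steps_le_1 :: "nat \<Rightarrow> nat list \<Rightarrow> bool" where
  "up_steps_le_1 a [] = True"
| "up_steps_le_1 a (e # es) = (e \<le> a + 1 \<and> up_steps_le_1 e es)"

lemma up_steps_le_1_append:
  "up_steps_le_1 a (xs @ ys) = (up_steps_le_1 a xs \<and> up_steps_le_1 (last (a # xs)) ys)"
  by (induction xs arbitrary: a) auto

lemma up_steps_le_1_map_Suc: "up_steps_le_1 (Suc a) (map Suc xs) = up_steps_le_1 a xs"
  by (induction xs arbitrary: a) auto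

lemma up_steps_le_1_rev_depths: "up_steps_le_1 a (rev (depths t))"
proof (induction t arbitrary: a)
  case (Node ts)
  have "up_steps_le_1 b (rev (forest_depths ts))" for b
    using Node.IH
  proof (induction ts arbitrary: b)
    case (Cons c ts)
    obtain Z where Z: "rev (depths c) = 0 # Z" by (simp add: depths_eq_children)
    have "up_steps_le_1 0 Z" using Cons.prems[of c 0] Z by simp
    then have "up_steps_le_1 x (map Suc (rev (depths c)))" for x
      using Z up_steps_le_1_map_Suc[of 0 Z] by simp
    then show ?case using Cons by (simp add: up_steps_le_1_append rev_map)
  qed simp
  then show ?case by (simp add: depths_Node)
qed

datatype letter = T | U | V

abbreviation occs :: "letter \<Rightarrow> letter list \<Rightarrow> nat" where
  "occs x r \<equiv> length (filter ((=) x) r)"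

text \<open>Relates, at the same position of a word over \<open>T, U, V\<close> (nodes of \<open>t, u, v\<close>), the states
  of the inner and outer merge for \<open>(t # u) # v\<close> (first two) and for \<open>t # (u # v)\<close> (last
  two). The two cases: no node of \<open>u\<close> since the last node of \<open>t\<close>, or one at least, of
  minimal depth \<open>m\<close>.\<close>
fun merge_inv ::
    "nat \<times> nat option \<Rightarrow> nat \<times> nat option \<Rightarrow> nat \<times> nat option \<Rightarrow> nat \<times> nat option \<Rightarrow> bool"
  where
  "merge_inv (a1, m1) (a2, m2) (a3, m3) (a4, m4) \<longleftrightarrow> a1 = a4 \<and>
     ((m1 = None \<and> a2 = a1 \<and>
        (\<exists>c. m3 = omin c m2 \<and> m4 = map_option (\<lambda>M. a3 + 1 + M - min_opt c M) m2))
    \<or> (\<exists>m. m1 = Some m \<and> m4 = Some m \<and> m2 = m3 \<and> m \<le> a3 \<and> a2 = a1 + 1 + a3 - m))"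

lemma merge_inv_step_U:
  assumes "merge_inv (a1, m1) (a2, m2) (a3, m3) (a4, m4)" "e \<le> a3 + 1"
  shows "min_opt m4 e = min_opt m1 e"
    and "merge_inv (a1, Some (min_opt m1 e)) (a1 + 1 + e - min_opt m1 e, None) (e, None)
                   (a4, Some (min_opt m4 e))"
proof -
  show "min_opt m4 e = min_opt m1 e"
  proof (cases m1)
    case None
    then obtain c where "m4 = map_option (\<lambda>M. a3 + 1 + M - min_opt c M) m2"
      using assms(1) by auto
    then show ?thesis
    proof (cases m2)
      case (Some M)
      then show ?thesis
        using \<open>m4 = _\<close> None assms(2) min_opt_le[of c M] by (auto simp: min_def)
    qed (use None in auto)
  qed (use assms(1) in auto)
  then show "merge_inv (a1, Some (min_opt m1 e)) (a1 + 1 + e - min_opt m1 e, None) (e, None)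
                       (a4, Some (min_opt m4 e))"
    using assms(1) min_opt_le[of m1 e] by auto
qed

lemma merge_inv_step_V:
  fixes f :: nat
  assumes "merge_inv (a1, m1) (a2, m2) (a3, m3) (a4, m4)"
  defines "y \<equiv> a3 + 1 + f - min_opt m3 f"
  shows "a2 + 1 + f - min_opt m2 f = a4 + 1 + y - min_opt m4 y
    \<and> merge_inv (a1, m1) (a2, Some (min_opt m2 f)) (a3, Some (min_opt m3 f))
        (a4, Some (min_opt m4 y))"
proof -
  from assms(1) consider
      (no_u) c where "a1 = a4" "m1 = None" "a2 = a1" "m3 = omin c m2"
        "m4 = map_option (\<lambda>M. a3 + 1 + M - min_opt c M) m2"
    | (u) m where "a1 = a4" "m1 = Some m" "m4 = Some m" "m2 = m3" "m \<le> a3" "a2 = a1 + 1 + a3 - m"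
    by auto
  then show ?thesis
  proof cases
    case no_u
    have "f - min_opt m2 f = y - min_opt m4 y"
      and "Some (min_opt m3 f) = omin c (Some (min_opt m2 f))"
      and "Some (min_opt m4 y) = map_option (\<lambda>M. a3 + 1 + M - min_opt c M) (Some (min_opt m2 f))"
      using no_u by (cases c; cases m2; auto simp: min_def y_def)+
    then show ?thesis
      using no_u min_opt_le[of m2 f] min_opt_le[of m4 y] by auto
  next
    case u
    moreover have "m < y" using u min_opt_le[of m3 f] by (simp add: y_def)
    ultimately show ?thesis using min_opt_le[of m3 f] by (auto simp: y_def)
  qed
qed

lemma merge_depths_assoc:
  "merge_inv s1 s2 s3 s4 \<Longrightarrow> up_steps_le_1 (fst s3) E \<Longrightarrow>
   length D = occs T r \<Longrightarrow> length E = occs U r \<Longrightarrow> length F = occs V r \<Longrightarrow>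
   merge_depths s2 (map (\<lambda>x. x = V) r)
       (merge_depths s1 (map (\<lambda>x. x = U) (filter (\<lambda>x. x \<noteq> V) r)) D E) F
   = merge_depths s4 (map (\<lambda>x. x \<noteq> T) r) D
       (merge_depths s3 (map (\<lambda>x. x = V) (filter (\<lambda>x. x \<noteq> T) r)) E F)"
proof (induction r arbitrary: s1 s2 s3 s4 D E F)
  case Nil
  then show ?case by simp
next
  case (Cons x r)
  obtain a1 m1 a2 m2 a3 m3 a4 m4
    where s: "s1 = (a1, m1)" "s2 = (a2, m2)" "s3 = (a3, m3)" "s4 = (a4, m4)"
    by (metis surj_pair)
  have a14: "a1 = a4" using Cons.prems(1) s by simp
  show ?case
  proof (cases x)
    case T
    then obtain d D' where "D = d # D'" using Cons.prems by (cases D) auto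
    moreover have "merge_inv (d, None) (d, None) s3 (d, None)"
      using s by (auto intro!: exI[of _ m3])
    ultimately show ?thesis using Cons.IH Cons.prems T by simp
  next
    case U
    then obtain e E' where E: "E = e # E'" using Cons.prems by (cases E) auto
    have "e \<le> a3 + 1" "up_steps_le_1 e E'" using Cons.prems E s by auto
    with merge_inv_step_U[OF Cons.prems(1)[unfolded s]] Cons.IH show ?thesis
      using Cons.prems U E s a14 by simp
  next
    case V
    then obtain f F' where F: "F = f # F'" using Cons.prems by (cases F) auto
    define y where "y = a3 + 1 + f - min_opt m3 f"
    note step = merge_inv_step_V[OF Cons.prems(1)[unfolded s], of f, folded y_def]
    with Cons.IH[OF step[THEN conjunct2]] show ?thesis
      using Cons.prems V F s by (simp add: y_def)
  qed
qed

section \<open>Words\<close>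

definition comp_words :: "nat \<Rightarrow> nat \<Rightarrow> bool list set" where
  "comp_words m n =
     {w. length (filter Not w) = m \<and> length (filter id w) = n \<and> (w \<noteq> [] \<longrightarrow> last w = False)}"

fun word_comp :: "nat \<Rightarrow> bool list \<Rightarrow> nat list" where
  "word_comp k [] = []"
| "word_comp k (True # w) = word_comp (Suc k) w"
| "word_comp k (False # w) = k # word_comp 0 w"

lemma word_comp_replicate: "word_comp k (replicate j True @ False # w) = (k + j) # word_comp 0 w"
  by (induction j arbitrary: k) auto

lemma word_comp_comp_word: "word_comp 0 (comp_word ks) = ks"
  by (induction ks) (auto simp: word_comp_replicate)

lemma comp_word_word_comp:
  "(w \<noteq> [] \<longrightarrow> last w = False) \<Longrightarrow> (w = [] \<longrightarrow> k = 0) \<Longrightarrow> comp_word (word_comp k w) = replicate k True @ w"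
proof (induction k w rule: word_comp.induct)
  case (2 k w)
  then have "w \<noteq> []" by auto
  then show ?case using 2 by (simp add: replicate_app_Cons_same)
qed (auto split: if_splits)

lemma length_word_comp: "length (word_comp k w) = length (filter Not w)"
  by (induction k w rule: word_comp.induct) auto

lemma sum_list_word_comp:
  "(w = [] \<longrightarrow> k = 0) \<Longrightarrow> (w \<noteq> [] \<longrightarrow> last w = False) \<Longrightarrow>
   sum_list (word_comp k w) = k + length (filter id w)"
proof (induction k w rule: word_comp.induct)
  case (2 k w)
  then have "w \<noteq> []" by auto
  then show ?case using 2 by simp
qed (auto split: if_splits)

lemma word_comp_in_compositions:
  "w \<in> comp_words m n \<Longrightarrow> word_comp 0 w \<in> compositions m n \<and> comp_word (word_comp 0 w) = w"
  using length_word_comp[of 0 w] sum_list_word_comp[of w 0] comp_word_word_comp[of w 0]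
  by (auto simp: comp_words_def compositions_def)

lemma bij_betw_comp_word: "bij_betw comp_word (compositions m n) (comp_words m n)"
proof (rule bij_betw_byWitness[where f' = "word_comp 0"])
  show "\<forall>ks\<in>compositions m n. word_comp 0 (comp_word ks) = ks"
    by (simp add: word_comp_comp_word)
  show "\<forall>w\<in>comp_words m n. comp_word (word_comp 0 w) = w"
    using word_comp_in_compositions by blast
  have "comp_word ks \<noteq> [] \<Longrightarrow> last (comp_word ks) = False" for ks
    by (induction ks) (auto simp: last_append)
  then show "comp_word ` compositions m n \<subseteq> comp_words m n"
    using comp_word_counts by (auto simp: comp_words_def compositions_def)
  show "word_comp 0 ` comp_words m n \<subseteq> compositions m n"
    using word_comp_in_compositions by blast
qed

lemma sum_compositions_eq_sum_comp_words:
  "(\<Sum>ks\<in>compositions m n. g ks) = (\<Sum>w\<in>comp_words m n. g (word_comp 0 w))"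
  using sum.reindex_bij_betw[OF bij_betw_comp_word[of m n], of "\<lambda>w. g (word_comp 0 w)"]
  by (simp add: word_comp_comp_word)

text \<open>A word over \<open>T, U, V\<close> ending with \<open>T\<close> records, for each node of a tree arising in both
  \<open>(t # u) # v\<close> and \<open>t # (u # v)\<close>, the tree it comes from (the last node is the root of \<open>t\<close>).
  Its two projections give the words of the compositions of either bracketing; on the right
  the root of \<open>u\<close>, which carries no letter, is appended as a final \<open>False\<close>.\<close>
definition letter_words :: "nat \<Rightarrow> nat \<Rightarrow> nat \<Rightarrow> letter list set" where
  "letter_words m a b = {w. occs T w = m \<and> occs U w = a \<and> occs V w = b \<and> w \<noteq> [] \<and> last w = T}"

definition left_words :: "letter list \<Rightarrow> bool list \<times> bool list" where
  "left_words w = (map (\<lambda>x. x = U) (filter (\<lambda>x. x \<noteq> V) w), map (\<lambda>x. x = V) w)"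

definition right_words :: "letter list \<Rightarrow> bool list \<times> bool list" where
  "right_words w = (map (\<lambda>x. x = V) (filter (\<lambda>x. x \<noteq> T) w) @ [False], map (\<lambda>x. x \<noteq> T) w)"

fun unleft_words :: "bool list \<Rightarrow> bool list \<Rightarrow> letter list" where
  "unleft_words (True # w2) w1 = V # unleft_words w2 w1"
| "unleft_words (False # w2) (b # w1) = (if b then U else T) # unleft_words w2 w1"
| "unleft_words _ _ = []"

fun unright_words :: "bool list \<Rightarrow> bool list \<Rightarrow> letter list" where
  "unright_words (False # w4) w3 = T # unright_words w4 w3"
| "unright_words (True # w4) (b # w3) = (if b then V else U) # unright_words w4 w3"
| "unright_words _ _ = []"

lemma letter_neq_iff:
  "x \<noteq> T \<longleftrightarrow> x = U \<or> x = V" "x \<noteq> U \<longleftrightarrow> x = T \<or> x = V" "x \<noteq> V \<longleftrightarrow> x = T \<or> x = U"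
  by (cases x; simp)+

lemma occs_projections:
  "length (filter Not (map (\<lambda>x. x = U) (filter (\<lambda>x. x \<noteq> V) w))) = occs T w"
  "length (filter id (map (\<lambda>x. x = U) (filter (\<lambda>x. x \<noteq> V) w))) = occs U w"
  "length (filter Not (map (\<lambda>x. x = V) w)) = occs T w + occs U w"
  "length (filter id (map (\<lambda>x. x = V) w)) = occs V w"
  "length (filter Not (map (\<lambda>x. x = V) (filter (\<lambda>x. x \<noteq> T) w))) = occs U w"
  "length (filter id (map (\<lambda>x. x = V) (filter (\<lambda>x. x \<noteq> T) w))) = occs V w"
  "length (filter Not (map (\<lambda>x. x \<noteq> T) w)) = occs T w"
  "length (filter id (map (\<lambda>x. x \<noteq> T) w)) = occs U w + occs V w"
  by (induction w) (auto simp: letter_neq_iff)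

lemma length_filter_Not_id: "length w = length (filter Not w) + length (filter id w)"
  by (induction w) auto

lemma last_filter: "xs \<noteq> [] \<Longrightarrow> P (last xs) \<Longrightarrow> last (filter P xs) = last xs \<and> filter P xs \<noteq> []"
  by (induction xs) (auto split: if_splits)

lemma left_words_unleft_words: "left_words (unleft_words w2 w1) = (w1, w2)"
  if "length (filter Not w2) = length w1"
  using that
proof (induction w2 arbitrary: w1)
  case (Cons b w2)
  show ?case
  proof (cases b)
    case False
    then obtain c w1' where "w1 = c # w1'" using Cons.prems by (cases w1) auto
    then show ?thesis using Cons False by (cases c) (auto simp: left_words_def)
  qed (use Cons in \<open>simp add: left_words_def\<close>)
qed (simp add: left_words_def)

lemma unleft_words_left_words: "case_prod (\<lambda>w1 w2. unleft_words w2 w1) (left_words w) = w"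
  by (induction w) (auto simp: left_words_def letter_neq_iff)

lemma right_words_unright_words: "right_words (unright_words w4 w3) = (w3 @ [False], w4)"
  if "length (filter id w4) = length w3"
  using that
proof (induction w4 arbitrary: w3)
  case (Cons b w4)
  show ?case
  proof (cases b)
    case True
    then obtain c w3' where "w3 = c # w3'" using Cons.prems by (cases w3) auto
    then show ?thesis using Cons True by (cases c) (auto simp: right_words_def)
  qed (use Cons in \<open>simp add: right_words_def\<close>)
qed (simp add: right_words_def)

lemma unright_words_right_words:
  "case_prod (\<lambda>w3 w4. unright_words w4 (butlast w3)) (right_words w) = w"
  by (induction w) (auto simp: right_words_def letter_neq_iff)

lemma bij_betw_left_words:
  assumes "0 < m"
  shows "bij_betw left_words (letter_words m a b) (comp_words m a \<times> comp_words (m + a) b)"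
proof (rule bij_betw_byWitness[where f' = "\<lambda>(w1, w2). unleft_words w2 w1"])
  have len: "length (filter Not w2) = length w1"
    if "w1 \<in> comp_words m a" "w2 \<in> comp_words (m + a) b" for w1 w2
    using that length_filter_Not_id[of w1] by (simp add: comp_words_def)
  show "\<forall>w\<in>letter_words m a b. (\<lambda>(w1, w2). unleft_words w2 w1) (left_words w) = w"
    using unleft_words_left_words by blast
  show "\<forall>p\<in>comp_words m a \<times> comp_words (m + a) b.
          left_words ((\<lambda>(w1, w2). unleft_words w2 w1) p) = p"
    using len by (auto simp: left_words_unleft_words)
  show "left_words ` letter_words m a b \<subseteq> comp_words m a \<times> comp_words (m + a) b"
  proof (rule image_subsetI)
    fix w assume w: "w \<in> letter_words m a b"
    then have "w \<noteq> []" "last w = T" by (auto simp: letter_words_def)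
    then have "last (filter (\<lambda>x. x \<noteq> V) w) = T" "filter (\<lambda>x. x \<noteq> V) w \<noteq> []"
      using last_filter[of w "\<lambda>x. x \<noteq> V"] by auto
    with w \<open>w \<noteq> []\<close> \<open>last w = T\<close> show "left_words w \<in> comp_words m a \<times> comp_words (m + a) b"
      using occs_projections[of w]
      by (auto simp: comp_words_def letter_words_def left_words_def last_map)
  qed
  show "(\<lambda>(w1, w2). unleft_words w2 w1) ` (comp_words m a \<times> comp_words (m + a) b)
          \<subseteq> letter_words m a b"
  proof (rule image_subsetI, clarify)
    fix w1 w2 assume ws: "w1 \<in> comp_words m a" "w2 \<in> comp_words (m + a) b"
    define w where "w = unleft_words w2 w1"
    have "left_words w = (w1, w2)"
      using len[OF ws] by (simp add: w_def left_words_unleft_words)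
    then have w2: "w2 = map (\<lambda>x. x = V) w" and w1: "w1 = map (\<lambda>x. x = U) (filter (\<lambda>x. x \<noteq> V) w)"
      by (auto simp: left_words_def)
    have occs: "occs T w = m" "occs U w = a" "occs V w = b"
      using occs_projections[of w] ws w1 w2 by (auto simp: comp_words_def)
    then have "w \<noteq> []" using assms by auto
    then have "last w \<noteq> V" using ws(2) w2 by (auto simp: comp_words_def last_map)
    then have "last (filter (\<lambda>x. x \<noteq> V) w) = last w" "filter (\<lambda>x. x \<noteq> V) w \<noteq> []"
      using last_filter[of w "\<lambda>x. x \<noteq> V"] \<open>w \<noteq> []\<close> by auto
    then have "last w \<noteq> U" using ws(1) w1 by (auto simp: comp_words_def last_map)
    with \<open>last w \<noteq> V\<close> have "last w = T" by (simp add: letter_neq_iff)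
    with occs \<open>w \<noteq> []\<close> show "unleft_words w2 w1 \<in> letter_words m a b"
      by (simp add: letter_words_def w_def)
  qed
qed


lemma comp_words_butlast:
  assumes "w \<in> comp_words (Suc a) b"
  shows "w = butlast w @ [False]"
    and "length (filter Not (butlast w)) = a" "length (filter id (butlast w)) = b"
proof -
  have "w \<noteq> []" "last w = False" using assms by (auto simp: comp_words_def)
  then obtain w' where w: "w = w' @ [False]"
    by (metis append_butlast_last_id)
  then show "w = butlast w @ [False]" by simp
  show "length (filter Not (butlast w)) = a" "length (filter id (butlast w)) = b"
    using assms by (simp_all add: w comp_words_def)
qed
lemma bij_betw_right_words:
  assumes "0 < m"
  shows "bij_betw right_words (letter_words m a b) (comp_words (Suc a) b \<times> comp_words m (a + b))"
proof (rule bij_betw_byWitness[where f' = "\<lambda>(w3, w4). unright_words w4 (butlast w3)"])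
  have len: "length (filter id w4) = length (butlast w3)"
    if "w3 \<in> comp_words (Suc a) b" "w4 \<in> comp_words m (a + b)" for w3 w4
    using that comp_words_butlast[OF that(1)] length_filter_Not_id[of "butlast w3"]
    by (simp add: comp_words_def)
  show "\<forall>w\<in>letter_words m a b. (\<lambda>(w3, w4). unright_words w4 (butlast w3)) (right_words w) = w"
    using unright_words_right_words by blast
  show "\<forall>p\<in>comp_words (Suc a) b \<times> comp_words m (a + b).
          right_words ((\<lambda>(w3, w4). unright_words w4 (butlast w3)) p) = p"
  proof clarify
    fix w3 w4 assume "w3 \<in> comp_words (Suc a) b" "w4 \<in> comp_words m (a + b)"
    with len show "right_words (unright_words w4 (butlast w3)) = (w3, w4)"
      using comp_words_butlast(1) by (simp add: right_words_unright_words)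
  qed
  show "right_words ` letter_words m a b \<subseteq> comp_words (Suc a) b \<times> comp_words m (a + b)"
  proof (rule image_subsetI)
    fix w assume w: "w \<in> letter_words m a b"
    then have "w \<noteq> []" "last w = T" by (auto simp: letter_words_def)
    with w show "right_words w \<in> comp_words (Suc a) b \<times> comp_words m (a + b)"
      using occs_projections[of w]
      by (auto simp: comp_words_def letter_words_def right_words_def last_map)
  qed
  show "(\<lambda>(w3, w4). unright_words w4 (butlast w3)) ` (comp_words (Suc a) b \<times> comp_words m (a + b))
          \<subseteq> letter_words m a b"
  proof (rule image_subsetI, clarify)
    fix w3 w4 assume ws: "w3 \<in> comp_words (Suc a) b" "w4 \<in> comp_words m (a + b)"
    define w where "w = unright_words w4 (butlast w3)"
    have "right_words w = (butlast w3 @ [False], w4)"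
      using len[OF ws] by (simp add: w_def right_words_unright_words)
    then have w3: "map (\<lambda>x. x = V) (filter (\<lambda>x. x \<noteq> T) w) = butlast w3"
      and w4: "map (\<lambda>x. x \<noteq> T) w = w4"
      by (auto simp: right_words_def)
    have occs: "occs T w = m" "occs U w = a" "occs V w = b"
      using occs_projections[of w] ws comp_words_butlast[OF ws(1)] w3 w4
      by (auto simp: comp_words_def)
    then have "w \<noteq> []" using assms by auto
    moreover have "last w4 = False" using ws(2) assms by (auto simp: comp_words_def)
    ultimately have "last w = T" using w4 by (auto simp: last_map)
    with occs \<open>w \<noteq> []\<close> show "unright_words w4 (butlast w3) \<in> letter_words m a b"
      by (simp add: letter_words_def w_def)
  qed
qed

lemma
  assumes "w \<in> comp_words (nnodes t) (deg u)" "0 < deg u"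
  shows rev_depths_hash_comp_word: "rev (depths (hash_comp t (word_comp 0 w) u))
            = merge_depths st (rev w) (rev (depths t)) (rev (forest_depths (children u)))"
    and nnodes_hash_comp_word: "nnodes (hash_comp t (word_comp 0 w) u) = nnodes t + deg u"
proof -
  have "word_comp 0 w \<in> compositions (nnodes t) (deg u)" "comp_word (word_comp 0 w) = w"
    using word_comp_in_compositions[OF assms(1)] by auto
  then show "rev (depths (hash_comp t (word_comp 0 w) u))
      = merge_depths st (rev w) (rev (depths t)) (rev (forest_depths (children u)))"
    and "nnodes (hash_comp t (word_comp 0 w) u) = nnodes t + deg u"
    using rev_depths_hash_comp[OF _ assms(2)] nnodes_hash_comp[OF _ assms(2)] by metis+
qed

lemma rev_left_right_words:
  assumes "rev w = T # w'"
  shows "rev (fst (left_words w)) = False # map (\<lambda>x. x = U) (filter (\<lambda>x. x \<noteq> V) w')"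
    and "rev (snd (left_words w)) = False # map (\<lambda>x. x = V) w'"
    and "rev (fst (right_words w)) = False # map (\<lambda>x. x = V) (filter (\<lambda>x. x \<noteq> T) w')"
    and "rev (snd (right_words w)) = False # map (\<lambda>x. x \<noteq> T) w'"
  using assms by (auto simp: left_words_def right_words_def rev_map rev_filter[symmetric])

section \<open>Associativity on trees\<close>

lemma hash_comp_assoc:
  assumes w: "w \<in> letter_words (nnodes t) (deg u) (deg v)" and u: "0 < deg u" and v: "0 < deg v"
  shows "hash_comp (hash_comp t (word_comp 0 (fst (left_words w))) u)
           (word_comp 0 (snd (left_words w))) v
       = hash_comp t (word_comp 0 (snd (right_words w)))
           (hash_comp u (word_comp 0 (fst (right_words w))) v)"
proof -
  define m where "m = nnodes t"
  have "0 < m" by (simp add: m_def nnodes_pos)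
  obtain W1 W2 where left: "left_words w = (W1, W2)" by fastforce
  obtain W3 W4 where right: "right_words w = (W3, W4)" by fastforce
  have W12: "W1 \<in> comp_words m (deg u)" "W2 \<in> comp_words (m + deg u) (deg v)"
    using bij_betw_apply[OF bij_betw_left_words[OF \<open>0 < m\<close>] w[folded m_def]] left by auto
  have W34: "W3 \<in> comp_words (Suc (deg u)) (deg v)" "W4 \<in> comp_words m (deg u + deg v)"
    using bij_betw_apply[OF bij_betw_right_words[OF \<open>0 < m\<close>] w[folded m_def]] right by auto
  define t1 where "t1 = hash_comp t (word_comp 0 W1) u"
  define t2 where "t2 = hash_comp t1 (word_comp 0 W2) v"
  define t3 where "t3 = hash_comp u (word_comp 0 W3) v"
  define t4 where "t4 = hash_comp t (word_comp 0 W4) t3"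
  let ?F = "\<lambda>x. rev (forest_depths (children x))"
  have t1: "rev (depths t1) = merge_depths (0, None) (rev W1) (rev (depths t)) (?F u)"
    "nnodes t1 = m + deg u"
    using W12(1) u by (simp_all add: t1_def m_def rev_depths_hash_comp_word nnodes_hash_comp_word)
  have t2: "rev (depths t2) = merge_depths (0, None) (rev W2) (rev (depths t1)) (?F v)"
    using rev_depths_hash_comp_word[of W2 t1 v] W12(2) t1(2) v by (simp add: t2_def)
  have t3: "rev (depths t3) = merge_depths (0, None) (rev W3) (rev (depths u)) (?F v)"
    "deg t3 = deg u + deg v"
    using rev_depths_hash_comp_word[of W3 u v] nnodes_hash_comp_word[of W3 u v] W34(1) v
    by (simp_all add: t3_def nnodes_eq_Suc_deg)
  have t4: "rev (depths t4) = merge_depths (0, None) (rev W4) (rev (depths t)) (?F t3)"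
    using rev_depths_hash_comp_word[of W4 t t3] W34(2) t3(2) u by (simp add: t4_def m_def)
  txt \<open>Apart from its final letter, the root of \<open>t\<close>, the word \<open>w\<close> drives all four merges, which
    is the situation of \<open>merge_depths_assoc\<close>.\<close>
  obtain w' where rev_w: "rev w = T # w'"
    using w by (cases w rule: rev_cases) (auto simp: letter_words_def)
  have occs: "occs T w' + 1 = m" "occs U w' = deg u" "occs V w' = deg v"
    using w arg_cong[OF rev_w, of "occs _"]
    by (auto simp: letter_words_def m_def rev_filter[symmetric])
  obtain rD where rD: "rev (depths t) = 0 # rD"
    by (simp add: depths_eq_children)
  have "length rD = occs T w'"
    using arg_cong[OF rD, of length] length_depths[of t] occs by (simp add: m_def)
  moreover note rev_left_right_words[OF rev_w, unfolded left right fst_conv snd_conv]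
  moreover have "merge_inv (0, None) (0, None) (0, None) (0, None)"
    by simp
  moreover have "up_steps_le_1 0 (rev (forest_depths (children u)))"
    using up_steps_le_1_rev_depths[of 0 u] by (simp add: depths_eq_children)
  ultimately have "rev (depths t2) = rev (depths t4)"
    using t1(1) t2 t3(1) t4 rD merge_depths_assoc occs
    by (simp add: depths_eq_children[of t3] depths_eq_children[of u] deg_eq_length_forest_depths)
  then show ?thesis
    using depths_inject left right by (simp add: t1_def t2_def t3_def t4_def)
qed

lemma sum_tprod_hash_comp_assoc:
  assumes u: "0 < deg u" and v: "0 < deg v"
  shows "(\<Sum>ks\<in>compositions (nnodes t) (deg u). tprod (hash_comp t ks u) v :: tree \<Rightarrow>\<^sub>0 'k::field)
       = (\<Sum>ks\<in>compositions (nnodes u) (deg v). tprod t (hash_comp u ks v))"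
proof -
  define m where "m = nnodes t"
  have "0 < m" by (simp add: m_def nnodes_pos)
  let ?S = "\<lambda>x. Poly_Mapping.single x (1::'k)"
  let ?L = "\<lambda>p. hash_comp (hash_comp t (word_comp 0 (fst p)) u) (word_comp 0 (snd p)) v"
  let ?R = "\<lambda>p. hash_comp t (word_comp 0 (snd p)) (hash_comp u (word_comp 0 (fst p)) v)"
  let ?W = "letter_words m (deg u) (deg v)"
  have "(\<Sum>ks\<in>compositions m (deg u). tprod (hash_comp t ks u) v)
      = (\<Sum>ks1\<in>compositions m (deg u). \<Sum>ks2\<in>compositions (m + deg u) (deg v).
           ?S (hash_comp (hash_comp t ks1 u) ks2 v))"
    by (rule sum.cong) (auto simp: tprod_eq_sum_compositions[OF v] nnodes_hash_comp[OF _ u] m_def)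
  also have "\<dots> = (\<Sum>w1\<in>comp_words m (deg u). \<Sum>w2\<in>comp_words (m + deg u) (deg v).
                      ?S (?L (w1, w2)))"
    by (simp add: sum_compositions_eq_sum_comp_words)
  also have "\<dots> = (\<Sum>p\<in>comp_words m (deg u) \<times> comp_words (m + deg u) (deg v). ?S (?L p))"
    by (simp add: sum.cartesian_product split_beta)
  also have "\<dots> = (\<Sum>w\<in>?W. ?S (?L (left_words w)))"
    by (rule sum.reindex_bij_betw[OF bij_betw_left_words[OF \<open>0 < m\<close>], symmetric])
  also have "\<dots> = (\<Sum>w\<in>?W. ?S (?R (right_words w)))"
    by (rule sum.cong) (auto simp: hash_comp_assoc[OF _ u v] m_def)
  also have "\<dots> = (\<Sum>p\<in>comp_words (Suc (deg u)) (deg v) \<times> comp_words m (deg u + deg v). ?S (?R p))"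
    by (rule sum.reindex_bij_betw[OF bij_betw_right_words[OF \<open>0 < m\<close>]])
  also have "\<dots> = (\<Sum>w3\<in>comp_words (Suc (deg u)) (deg v). \<Sum>w4\<in>comp_words m (deg u + deg v).
                      ?S (?R (w3, w4)))"
    by (simp add: sum.cartesian_product split_beta)
  also have "\<dots> = (\<Sum>ks3\<in>compositions (nnodes u) (deg v). \<Sum>ks4\<in>compositions m (deg u + deg v).
                      ?S (hash_comp t ks4 (hash_comp u ks3 v)))"
    by (simp add: sum_compositions_eq_sum_comp_words nnodes_eq_Suc_deg)
  also have "\<dots> = (\<Sum>ks\<in>compositions (nnodes u) (deg v). tprod t (hash_comp u ks v))"
  proof (rule sum.cong)
    fix ks assume ks: "ks \<in> compositions (nnodes u) (deg v)"
    have "deg (hash_comp u ks v) = deg u + deg v"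
      using nnodes_hash_comp[OF ks v] by (simp add: nnodes_eq_Suc_deg)
    with u show "(\<Sum>ks4\<in>compositions m (deg u + deg v). ?S (hash_comp t ks4 (hash_comp u ks v)))
        = tprod t (hash_comp u ks v)"
      by (simp add: tprod_eq_sum_compositions m_def)
  qed simp
  finally show ?thesis by (simp add: m_def)
qed

lemma deg_eq_0_iff: "deg t = 0 \<longleftrightarrow> t = odot"
proof
  assume "deg t = 0"
  then have "forest_depths (children t) = []"
    by (simp add: deg_eq_length_forest_depths)
  then have "children t = []"
    by (cases "children t") (auto simp: depths_eq_children)
  then show "t = odot"
    by (metis Node_children odot_def)
qed (simp add: odot_def deg_def)

lemma tprod_odot_right: "tprod t odot = Poly_Mapping.single t 1"
  by (simp add: tprod_def deg_eq_0_iff)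

text \<open>There is a single composition, \<open>[deg v]\<close>: all of \<open>v\<close> is grafted onto the one node of \<open>odot\<close>.\<close>
lemma tprod_odot_left: "tprod odot v = (Poly_Mapping.single v 1 :: tree \<Rightarrow>\<^sub>0 'k::field)"
proof (cases "deg v = 0")
  case True
  then show ?thesis by (simp add: deg_eq_0_iff tprod_odot_right)
next
  case False
  then have v: "0 < deg v" by simp
  have one: "nnodes odot = 1" by (simp add: odot_def)
  have comps: "compositions (nnodes odot) (deg v) = {[deg v]}"
    by (auto simp: compositions_def length_Suc_conv one)
  have "rev (depths (hash_comp odot [deg v] v))
      = merge_depths (0, None) (rev (comp_word [deg v])) (rev (depths odot))
          (rev (forest_depths (children v)))"
    using comps v by (intro rev_depths_hash_comp) auto
  also have "\<dots> = 0 # rev (rel_depths None (forest_depths (children v)))"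
    using merge_depths_replicate_True[of "rev (forest_depths (children v))" "deg v" 0 None]
    by (simp add: odot_def depths_Node deg_eq_length_forest_depths rev_rel_depths map_idI)
  also have "\<dots> = rev (depths v)"
  proof -
    have "forest_depths (children v) \<noteq> []"
      using v by (simp add: deg_eq_length_forest_depths)
    then have "rel_depths None (forest_depths (children v)) = forest_depths (children v)"
      by (intro rel_depths_forest) (auto dest: forest_depths_ge_1 simp: last_forest_depths)
    then show ?thesis by (simp add: depths_eq_children[of v])
  qed
  finally have "hash_comp odot [deg v] v = v"
    by (simp add: depths_inject)
  then show ?thesis by (simp add: tprod_eq_sum_compositions[OF v] comps)
qed

section \<open>The bilinear extension\<close>

definition scale :: "'k::semiring_0 \<Rightarrow> ('a \<Rightarrow>\<^sub>0 'k) \<Rightarrow> ('a \<Rightarrow>\<^sub>0 'k)" where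
  "scale a p = Poly_Mapping.map (\<lambda>c. a * c) p"

lemma lookup_scale [simp]: "Poly_Mapping.lookup (scale a p) k = a * Poly_Mapping.lookup p k"
  by (simp add: scale_def map.rep_eq when_def)

lemma keys_scale: "Poly_Mapping.keys (scale a p) \<subseteq> Poly_Mapping.keys p"
  by (auto simp: in_keys_iff)

lemma scale_scale: "scale a (scale b p) = scale (a * b) (p :: 'a \<Rightarrow>\<^sub>0 'k::semiring_0)"
  by (rule poly_mapping_eqI) (simp add: mult.assoc)

lemma scale_sum: "scale a (\<Sum>i\<in>I. f i) = (\<Sum>i\<in>I. scale a (f i))"
  by (rule poly_mapping_eqI) (simp add: lookup_sum sum_distrib_left)

lemma sum_lookup_when:
  fixes x :: "'a \<Rightarrow>\<^sub>0 'k::semiring_1"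
  shows "(\<Sum>t\<in>Poly_Mapping.keys x. Poly_Mapping.lookup x t * (1 when t = k))
      = Poly_Mapping.lookup x k"
  by (cases "k \<in> Poly_Mapping.keys x") (auto simp: when_def in_keys_iff if_distrib cong: if_cong)

lemma poly_mapping_sum_single:
  fixes x :: "'a \<Rightarrow>\<^sub>0 'k::semiring_1"
  shows "x = (\<Sum>t\<in>Poly_Mapping.keys x. scale (Poly_Mapping.lookup x t) (Poly_Mapping.single t 1))"
  by (rule poly_mapping_eqI) (simp add: lookup_sum lookup_single sum_lookup_when)

lemma hmult_eq_sum_tprod:
  "hmult x y = (\<Sum>t\<in>Poly_Mapping.keys x. \<Sum>u\<in>Poly_Mapping.keys y.
                  scale (Poly_Mapping.lookup x t * Poly_Mapping.lookup y u) (tprod t u))"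
  by (simp add: hmult_def scale_def)

lemma lookup_hmult:
  "Poly_Mapping.lookup (hmult x y) w = (\<Sum>t\<in>Poly_Mapping.keys x. \<Sum>u\<in>Poly_Mapping.keys y.
     Poly_Mapping.lookup x t * Poly_Mapping.lookup y u * Poly_Mapping.lookup (tprod t u) w)"
  by (simp add: hmult_eq_sum_tprod lookup_sum)

lemma lookup_hmult_superset:
  assumes "finite A" "Poly_Mapping.keys x \<subseteq> A" "finite B" "Poly_Mapping.keys y \<subseteq> B"
  shows "Poly_Mapping.lookup (hmult x y) w = (\<Sum>t\<in>A. \<Sum>u\<in>B.
     Poly_Mapping.lookup x t * Poly_Mapping.lookup y u * Poly_Mapping.lookup (tprod t u) w)"
proof -
  have "Poly_Mapping.lookup (hmult x y) w = (\<Sum>t\<in>A. \<Sum>u\<in>Poly_Mapping.keys y.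
      Poly_Mapping.lookup x t * Poly_Mapping.lookup y u * Poly_Mapping.lookup (tprod t u) w)"
    unfolding lookup_hmult by (rule sum.mono_neutral_left) (use assms in \<open>auto simp: in_keys_iff\<close>)
  also have "\<dots> = (\<Sum>t\<in>A. \<Sum>u\<in>B.
      Poly_Mapping.lookup x t * Poly_Mapping.lookup y u * Poly_Mapping.lookup (tprod t u) w)"
    by (rule sum.cong[OF refl], rule sum.mono_neutral_left) (use assms in \<open>auto simp: in_keys_iff\<close>)
  finally show ?thesis .
qed

lemma hmult_add_left: "hmult (p + q) y = hmult p y + hmult q y"
proof (rule poly_mapping_eqI)
  fix w
  let ?A = "Poly_Mapping.keys p \<union> Poly_Mapping.keys q" and ?B = "Poly_Mapping.keys y"
  have "Poly_Mapping.keys (p + q) \<subseteq> ?A" by (rule Poly_Mapping.keys_add)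
  then show "Poly_Mapping.lookup (hmult (p + q) y) w
      = Poly_Mapping.lookup (hmult p y + hmult q y) w"
    by (simp add: lookup_add lookup_hmult_superset[of ?A _ ?B] algebra_simps sum.distrib)
qed

lemma hmult_add_right: "hmult x (p + q) = hmult x p + hmult x q"
proof (rule poly_mapping_eqI)
  fix w
  let ?A = "Poly_Mapping.keys x" and ?B = "Poly_Mapping.keys p \<union> Poly_Mapping.keys q"
  have "Poly_Mapping.keys (p + q) \<subseteq> ?B" by (rule Poly_Mapping.keys_add)
  then show "Poly_Mapping.lookup (hmult x (p + q)) w
      = Poly_Mapping.lookup (hmult x p + hmult x q) w"
    by (simp add: lookup_add lookup_hmult_superset[of ?A _ ?B] algebra_simps sum.distrib)
qed

lemma hmult_scale_left: "hmult (scale a p) y = scale a (hmult p y)"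
proof (rule poly_mapping_eqI)
  fix w
  let ?A = "Poly_Mapping.keys p" and ?B = "Poly_Mapping.keys y"
  show "Poly_Mapping.lookup (hmult (scale a p) y) w = Poly_Mapping.lookup (scale a (hmult p y)) w"
    using keys_scale[of a p]
    by (simp add: lookup_hmult_superset[of ?A _ ?B] sum_distrib_left algebra_simps)
qed

lemma hmult_scale_right: "hmult x (scale a p) = scale a (hmult x p)"
proof (rule poly_mapping_eqI)
  fix w
  let ?A = "Poly_Mapping.keys x" and ?B = "Poly_Mapping.keys p"
  show "Poly_Mapping.lookup (hmult x (scale a p)) w = Poly_Mapping.lookup (scale a (hmult x p)) w"
    using keys_scale[of a p]
    by (simp add: lookup_hmult_superset[of ?A _ ?B] sum_distrib_left algebra_simps)
qed

lemma hmult_zero_left [simp]: "hmult 0 y = 0"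
  and hmult_zero_right [simp]: "hmult x 0 = 0"
  by (simp_all add: hmult_def)

lemma hmult_sum_left: "hmult (\<Sum>i\<in>I. f i) y = (\<Sum>i\<in>I. hmult (f i) y)"
  by (induction I rule: infinite_finite_induct) (simp_all add: hmult_add_left)

lemma hmult_sum_right: "hmult x (\<Sum>i\<in>I. f i) = (\<Sum>i\<in>I. hmult x (f i))"
  by (induction I rule: infinite_finite_induct) (simp_all add: hmult_add_right)

lemma hmult_single_single: "hmult (Poly_Mapping.single t 1) (Poly_Mapping.single u 1) = tprod t u"
  by (rule poly_mapping_eqI) (simp add: lookup_hmult)

lemma hmult_expand_left:
  "hmult x y = (\<Sum>t\<in>Poly_Mapping.keys x.
      scale (Poly_Mapping.lookup x t) (hmult (Poly_Mapping.single t 1) y))"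
  by (subst poly_mapping_sum_single[of x]) (simp add: hmult_sum_left hmult_scale_left)

lemma hmult_expand_right:
  "hmult x y = (\<Sum>v\<in>Poly_Mapping.keys y.
      scale (Poly_Mapping.lookup y v) (hmult x (Poly_Mapping.single v 1)))"
  by (subst poly_mapping_sum_single[of y]) (simp add: hmult_sum_right hmult_scale_right)

lemma hmult_odot_right: "hmult x (Poly_Mapping.single odot 1) = (x :: tree \<Rightarrow>\<^sub>0 'k::field)"
  by (rule poly_mapping_eqI) (simp add: lookup_hmult tprod_odot_right lookup_single sum_lookup_when)

lemma hmult_odot_left: "hmult (Poly_Mapping.single odot 1) x = (x :: tree \<Rightarrow>\<^sub>0 'k::field)"
  by (rule poly_mapping_eqI) (simp add: lookup_hmult tprod_odot_left lookup_single sum_lookup_when)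

lemma hmult_tprod_single:
  "hmult (tprod t u) (Poly_Mapping.single v 1)
      = (hmult (Poly_Mapping.single t 1) (tprod u v) :: tree \<Rightarrow>\<^sub>0 'k::field)"
proof (cases "u = odot \<or> v = odot")
  case True
  then show ?thesis
    by (auto simp: tprod_odot_left tprod_odot_right hmult_single_single hmult_odot_right)
next
  case False
  then have u: "0 < deg u" and v: "0 < deg v"
    by (auto simp: deg_eq_0_iff[symmetric])
  have "hmult (tprod t u) (Poly_Mapping.single v 1)
      = (\<Sum>ks\<in>compositions (nnodes t) (deg u). tprod (hash_comp t ks u) v :: tree \<Rightarrow>\<^sub>0 'k)"
    by (simp add: tprod_eq_sum_compositions[OF u] hmult_sum_left hmult_single_single)
  also have "\<dots> = (\<Sum>ks\<in>compositions (nnodes u) (deg v). tprod t (hash_comp u ks v))"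
    by (rule sum_tprod_hash_comp_assoc[OF u v])
  also have "\<dots> = hmult (Poly_Mapping.single t 1) (tprod u v)"
    by (simp add: tprod_eq_sum_compositions[OF v] hmult_sum_right hmult_single_single)
  finally show ?thesis .
qed

lemma hmult_assoc: "hmult (hmult x y) z = hmult x (hmult y z :: tree \<Rightarrow>\<^sub>0 'k::field)"
proof -
  let ?K = Poly_Mapping.keys and ?l = Poly_Mapping.lookup
    and ?S = "\<lambda>v. Poly_Mapping.single v (1::'k)"
  have "hmult (hmult x y) z = (\<Sum>t\<in>?K x. \<Sum>u\<in>?K y. scale (?l x t * ?l y u) (hmult (tprod t u) z))"
    by (simp add: hmult_eq_sum_tprod[of x y] hmult_sum_left hmult_scale_left)
  also have "\<dots> = (\<Sum>t\<in>?K x. \<Sum>u\<in>?K y. \<Sum>v\<in>?K z.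
                      scale (?l x t * ?l y u * ?l z v) (hmult (?S t) (tprod u v)))"
    by (simp add: hmult_expand_right[of "tprod _ _" z] hmult_tprod_single scale_sum scale_scale)
  also have "\<dots> = (\<Sum>t\<in>?K x. scale (?l x t) (hmult (?S t) (hmult y z)))"
    by (simp add: hmult_eq_sum_tprod[of y z] hmult_sum_right hmult_scale_right scale_sum scale_scale
        mult.assoc)
  also have "\<dots> = hmult x (hmult y z)"
    by (rule hmult_expand_left[symmetric])
  finally show ?thesis .
qed

theorem proposition3p5:
  fixes x y z :: "tree \<Rightarrow>\<^sub>0 'k::field"
  shows "hmult (hmult x y) z = hmult x (hmult y z)
         \<and> hmult (Poly_Mapping.single odot 1) x = x
         \<and> hmult x (Poly_Mapping.single odot 1) = x"
  using hmult_assoc hmult_odot_left hmult_odot_right by blast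

end
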